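(* Let $\mathcal H$ be a real Hilbert space, let $\beta\in\left]0,+\infty\right[$, let $\varepsilon\in\left]0,\min\{1/2,\beta\}\right[$, let $x_0\in\mathcal H$, let $f\colon\mathcal H\to\left]-\infty,+\infty\right]$ be proper, lower semicontinuous and convex, let $g\colon\mathcal H\to\mathbb R$ be convex and differentiable with a $1/\beta$-Lipschitz gradient, and suppose that the set $S$ of solutions to the problem of minimizing $f(x)+g(x)$ over $x\in\mathcal H$ is nonempty. Let $(\gamma_n)_{n\in\mathbb N}$ be a sequence in $\left[\varepsilon,2\beta/(1+\varepsilon)\right]$, and let $(a_n)_{n\in\mathbb N}$ and $(b_n)_{n\in\mathbb N}$ be sequences in $\mathcal H$ such that $\sum_{n\in\mathbb N}\|a_n\|<+\infty$ and $\sum_{n\in\mathbb N}\|b_n\|<+\infty$. For every $n\in\mathbb N$, let $\lambda_n\in\left[\varepsilon,(1-\varepsilon)(2+\varepsilon-\gamma_n/(2\beta))\right]$ and set $$x_{n+1}=x_n+\lambda_n\Big(\mathrm{prox}_{\gamma_n f}\big(x_n-\gamma_n(\nabla g(x_n)+b_n)\big)+a_n-x_n\Big).$$ Then: (i) $\sum_{n\in\mathbb N}\|\mathrm{prox}_{\gamma_n f}(x_n-\gamma_n\nabla g(x_n))-x_n\|^2<+\infty$; (ii) for every $x\in S$, $\sum_{n\in\mathbb N}\|\nabla g(x_n)-\nabla g(x)\|^2<+\infty$; (iii) $(x_n)_{n\in\mathbb N}$ converges weakly to a point in $S$; (iv) if $\partial f$ is demiregular at every point in $S$, or $\nabla g$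 is demiregular at every point in $S$, or $\mathrm{int}\,S\neq\varnothing$, then $(x_n)_{n\in\mathbb N}$ converges strongly to a point in $S$.
   Context: For a proper lower semicontinuous convex $h$ and $x\in\mathcal H$, $\mathrm{prox}_h x$ is the unique minimizer of $h+\frac12\|x-\cdot\|^2$. $\partial f(x)=\{u\in\mathcal H\mid (\forall y)\ \langle y-x,u\rangle+f(x)\leq f(y)\}$ is the subdifferential. An operator $C\colon\mathcal H\to2^{\mathcal H}$ is demiregular at $x\in\mathrm{dom}\,C$ if for every sequence $((x_n,u_n))_{n\in\mathbb N}$ with $u_n\in Cx_n$ and every $u\in Cx$ such that $x_n\rightharpoonup x$ (weakly) and $u_n\to u$ (strongly), one has $x_n\to x$. $\mathrm{int}$ denotes interior. *)

theory Defs
  imports "HOL-Analysis.Analysis"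
begin

text \<open>Extended-real valued functions f : H \<Rightarrow> ]-\<infinity>,+\<infinity>] are modelled as
  functions into ereal that never take the value -\<infinity>.\<close>

definition proper_fun :: "('a \<Rightarrow> ereal) \<Rightarrow> bool" where
  "proper_fun f \<longleftrightarrow> (\<forall>x. f x \<noteq> -\<infinity>) \<and> (\<exists>x. f x \<noteq> \<infinity>)"

definition lsc_fun :: "('a::topological_space \<Rightarrow> ereal) \<Rightarrow> bool" where
  "lsc_fun f \<longleftrightarrow> (\<forall>c::ereal. closed {x. f x \<le> c})"

definition convex_fun :: "('a::real_vector \<Rightarrow> ereal) \<Rightarrow> bool" where
  "convex_fun f \<longleftrightarrow> (\<forall>x y t. 0 < t \<and> t < 1 \<longrightarrow>
      f (t *\<^sub>R x + (1 - t) *\<^sub>R y) \<le> ereal t * f x + ereal (1 - t) * f y)"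

definition prox :: "('a::real_normed_vector \<Rightarrow> ereal) \<Rightarrow> 'a \<Rightarrow> 'a" where
  "prox h x = (THE p. \<forall>y. h p + ereal ((1/2) * (norm (x - p))\<^sup>2)
                          \<le> h y + ereal ((1/2) * (norm (x - y))\<^sup>2))"

definition subdiff :: "('a::real_inner \<Rightarrow> ereal) \<Rightarrow> 'a \<Rightarrow> 'a set" where
  "subdiff f x = {u. \<forall>y. ereal (inner (y - x) u) + f x \<le> f y}"

definition weakly_converges :: "(nat \<Rightarrow> 'a::real_inner) \<Rightarrow> 'a \<Rightarrow> bool" where
  "weakly_converges xs x \<longleftrightarrow> (\<forall>y. (\<lambda>n. inner (xs n) y) \<longlonglongrightarrow> inner x y)"

definition demiregular_at :: "('a::real_inner \<Rightarrow> 'a set) \<Rightarrow> 'a \<Rightarrow> bool" where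
  "demiregular_at C x \<longleftrightarrow> C x \<noteq> {} \<and>
     (\<forall>xs us u. (\<forall>n. us n \<in> C (xs n)) \<and> u \<in> C x \<and> weakly_converges xs x \<and> us \<longlonglongrightarrow> u
        \<longrightarrow> xs \<longlonglongrightarrow> x)"

end

theory Submission
  imports Defs "HOL-Library.Diagonal_Subsequence"
begin

text \<open>
  Write \<open>p\<^sub>n\<close> for the exact forward--backward step from \<open>x\<^sub>n\<close>.  For every minimizer \<open>z\<close>,
  monotonicity of \<open>\<partial>f\<close> (the subgradient \<open>(x\<^sub>n - p\<^sub>n)/\<gamma>\<^sub>n - \<nabla>g(x\<^sub>n)\<close> at \<open>p\<^sub>n\<close> against
  \<open>-\<nabla>g(z)\<close> at \<open>z\<close>) together with the Baillon--Haddad cocoercivity of \<open>\<nabla>g\<close> gives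
  \<open>\<parallel>x\<^sub>n\<^sub>+\<^sub>1 - z\<parallel>\<^sup>2 \<le> \<parallel>x\<^sub>n - z\<parallel>\<^sup>2 - \<lambda>\<^sub>n Q\<^sub>n(z) + e\<^sub>n\<close> with summable errors \<open>e\<^sub>n\<close>
  coming from \<open>a\<^sub>n\<close>, \<open>b\<^sub>n\<close> and nonexpansiveness of the proximity operator.  The step-size constraints
  make the quadratic form \<open>Q\<^sub>n(z)\<close> dominate both \<open>\<parallel>p\<^sub>n - x\<^sub>n\<parallel>\<^sup>2\<close> and \<open>\<parallel>\<nabla>g(x\<^sub>n) - \<nabla>g(z)\<parallel>\<^sup>2\<close>,
  which gives (i) and (ii).  Hence \<open>\<nabla>g(x\<^sub>n) \<rightarrow> \<nabla>g(z)\<close> and the subgradients converge strongly;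
  since the graphs of a cocoercive operator and of \<open>\<partial>f\<close> are closed for weak-strong convergence,
  every weak cluster point lies in \<open>S\<close>, and Opial's lemma gives (iii).  For (iv), demiregularity
  upgrades the weak limit directly, while a ball inside \<open>S\<close> turns the quasi-Fejer inequality
  into summability of \<open>\<parallel>x\<^sub>n\<^sub>+\<^sub>1 - x\<^sub>n\<parallel>\<close>.
\<close>

section \<open>Real sequences\<close>

lemma le_by_vanishing_parameter:
  fixes a b c :: real
  assumes "\<And>t. 0 < t \<Longrightarrow> t < 1 \<Longrightarrow> a \<le> b + t * c"
  shows "a \<le> b"
proof (rule tendsto_lowerbound)
  show "((\<lambda>t. b + t * c) \<longlongrightarrow> b) (at_right 0)"
    by (auto intro!: tendsto_eq_intros)
  show "\<forall>\<^sub>F t in at_right 0. a \<le> b + t * c"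
    unfolding eventually_at_right_field using assms by (intro exI[of _ 1]) auto
qed simp

lemma quadratic_nonneg_imp_linear_coeff_zero:
  fixes a b :: real
  assumes "\<And>t. 0 \<le> t * a + t\<^sup>2 * b"
  shows "a = 0"
proof -
  have "a \<le> 0 + t * b" "- a \<le> 0 + t * b" if "0 < t" for t
  proof -
    have "0 \<le> t * (t * b - a)" "0 \<le> t * (t * b + a)"
      using assms[of "- t"] assms[of t] by (simp_all add: power2_eq_square algebra_simps)
    then show "a \<le> 0 + t * b" "- a \<le> 0 + t * b"
      using that by (simp_all add: zero_le_mult_iff)
  qed
  then have "a \<le> 0" "- a \<le> 0" by (metis le_by_vanishing_parameter)+
  then show ?thesis by simp
qed

lemma quasi_fejer_convergent:
  fixes u e :: "nat \<Rightarrow> real"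
  assumes u: "\<And>n. 0 \<le> u n" and e: "\<And>n. 0 \<le> e n" "summable e"
    and step: "\<And>n. u (Suc n) \<le> u n + e n"
  shows "convergent u"
proof -
  define v where "v n = u n - (\<Sum>k<n. e k)" for n
  have "decseq v"
  proof (rule decseq_SucI)
    show "v (Suc n) \<le> v n" for n
      using step[of n] by (simp add: v_def)
  qed
  moreover have "\<forall>n. - suminf e \<le> v n"
  proof
    fix n
    have "(\<Sum>k<n. e k) \<le> suminf e"
      using e by (intro sum_le_suminf) auto
    then show "- suminf e \<le> v n"
      using u[of n] by (simp add: v_def)
  qed
  ultimately obtain l where "v \<longlonglongrightarrow> l" by (rule decseq_convergent)
  then have "(\<lambda>n. v n + (\<Sum>k<n. e k)) \<longlonglongrightarrow> l + suminf e"
    by (intro tendsto_add summable_LIMSEQ e)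
  then show ?thesis by (auto simp: v_def convergent_def)
qed

lemma summable_by_telescoping:
  fixes a c d :: "nat \<Rightarrow> real"
  assumes a: "\<And>n. 0 \<le> a n" and c: "\<And>n. 0 \<le> c n" and d: "\<And>n. 0 \<le> d n" "summable d"
    and step: "\<And>n. a (Suc n) \<le> a n - c n + d n"
  shows "summable c"
proof (rule summableI_nonneg_bounded[where x="a 0 + suminf d"])
  fix n
  have "(\<Sum>k<n. c k) \<le> a 0 - a n + (\<Sum>k<n. d k)"
  proof (induction n)
    case (Suc n)
    then show ?case using step[of n] by simp
  qed simp
  moreover have "(\<Sum>k<n. d k) \<le> suminf d"
    using d by (intro sum_le_suminf) auto
  ultimately show "(\<Sum>k<n. c k) \<le> a 0 + suminf d"
    using a[of n] by linarith
qed (rule c)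

lemma not_tendsto_imp_subseq_away:
  fixes u :: "nat \<Rightarrow> real"
  assumes "\<not> u \<longlonglongrightarrow> l"
  obtains d and s :: "nat \<Rightarrow> nat" where "d > 0" "strict_mono s" "\<And>k. d \<le> \<bar>u (s k) - l\<bar>"
proof -
  obtain d where d: "d > 0" "\<not> eventually (\<lambda>n. dist (u n) l < d) sequentially"
    using assms unfolding tendsto_iff by blast
  then have "\<forall>N. \<exists>n\<ge>N. d \<le> \<bar>u n - l\<bar>"
    unfolding eventually_sequentially dist_real_def by (simp add: not_less)
  then have inf: "infinite {n. d \<le> \<bar>u n - l\<bar>}"
    by (simp add: infinite_nat_iff_unbounded_le)
  define s where "s = enumerate {n. d \<le> \<bar>u n - l\<bar>}"
  have "strict_mono s"
    unfolding s_def using inf by (rule strict_mono_enumerate)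
  moreover have "d \<le> \<bar>u (s k) - l\<bar>" for k
    using enumerate_in_set[OF inf, of k] by (simp add: s_def)
  ultimately show ?thesis
    using that[OF d(1)] by blast
qed

lemma Cauchy_if_dist_le_null:
  fixes u :: "nat \<Rightarrow> 'a::metric_space"
  assumes dist: "\<And>m n. dist (u m) (u n) \<le> h m + h n" and h: "h \<longlonglongrightarrow> 0"
  shows "Cauchy u"
proof (rule metric_CauchyI)
  fix e :: real assume "0 < e"
  then obtain N where N: "\<And>n. n \<ge> N \<Longrightarrow> h n < e / 2"
    using h unfolding LIMSEQ_def dist_real_def by (metis abs_less_iff diff_zero half_gt_zero)
  show "\<exists>M. \<forall>m\<ge>M. \<forall>n\<ge>M. dist (u m) (u n) < e"
  proof (intro exI allI impI)
    fix m n assume "N \<le> m" "N \<le> n"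
    then show "dist (u m) (u n) < e"
      using dist[of m n] N[of m] N[of n] by linarith
  qed
qed

lemma convergent_if_summable_steps:
  fixes x :: "nat \<Rightarrow> 'a::{real_normed_vector, complete_space}"
  assumes "summable (\<lambda>n. norm (x (Suc n) - x n))"
  shows "convergent x"
proof -
  define t where "t n = (\<Sum>k<n. norm (x (Suc k) - x k))" for n
  have "dist (x m) (x n) \<le> dist (t m) (t n)" for m n
  proof -
    have "dist (x m) (x n) \<le> t m - t n" if "n \<le> m" for m n
    proof -
      have "norm (x m - x n) \<le> (\<Sum>k=n..<m. norm (x (Suc k) - x k))"
        using sum_Suc_diff'[OF that, of x] by (metis norm_sum)
      also have "\<dots> = t m - t n"
        unfolding t_def using that by (metis atLeast0LessThan sum_diff_nat_ivl zero_le)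
      finally show ?thesis by (simp add: dist_norm)
    qed
    from this[of m n] this[of n m] show ?thesis
      by (cases "n \<le> m") (auto simp: dist_real_def dist_commute)
  qed
  moreover have "Cauchy t"
    using assms summable_LIMSEQ convergent_Cauchy unfolding t_def convergent_def by blast
  ultimately have "Cauchy x"
    unfolding Cauchy_def by (meson le_less_trans)
  then show ?thesis by (rule Cauchy_convergent)
qed

lemma power2_le_add_bounded:
  fixes u v e M E :: real
  assumes "0 \<le> v" "v \<le> u + e" "0 \<le> u" "u \<le> M" "0 \<le> e" "e \<le> E"
  shows "v\<^sup>2 \<le> u\<^sup>2 + (2 * M + E) * e"
proof -
  have "v\<^sup>2 \<le> (u + e)\<^sup>2"
    using assms by (intro power_mono) auto
  also have "\<dots> = u\<^sup>2 + 2 * u * e + e * e"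
    by (simp add: power2_eq_square algebra_simps)
  also have "\<dots> \<le> u\<^sup>2 + 2 * M * e + E * e"
    using assms by (intro add_mono mult_right_mono) auto
  finally show ?thesis
    by (simp add: algebra_simps)
qed

lemma bounded_if_convergent:
  fixes u :: "nat \<Rightarrow> 'a::real_normed_vector"
  assumes "convergent u"
  obtains C where "\<And>n. norm (u n) \<le> C"
proof -
  obtain C where "\<forall>n. norm (u n) \<le> C"
    using convergent_imp_Bseq[OF assms] unfolding Bseq_def by blast
  then show ?thesis
    by (intro that) blast
qed

lemma summable_power2_norm_imp_tendsto_zero:
  fixes h :: "nat \<Rightarrow> 'a::real_normed_vector"
  assumes "summable (\<lambda>n. (norm (h n))\<^sup>2)"
  shows "h \<longlonglongrightarrow> 0"
proof -
  have "(\<lambda>n. sqrt ((norm (h n))\<^sup>2)) \<longlonglongrightarrow> sqrt 0"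
    using summable_LIMSEQ_zero[OF assms] by (rule tendsto_real_sqrt)
  then show ?thesis
    by (simp add: tendsto_norm_zero_iff)
qed

section \<open>Hilbert space geometry\<close>

lemma power2_norm_add:
  fixes a b :: "'a::real_inner"
  shows "(norm (a + b))\<^sup>2 = (norm a)\<^sup>2 + 2 * inner a b + (norm b)\<^sup>2"
  by (simp add: power2_norm_eq_inner inner_add_left inner_add_right inner_commute)

lemma power2_norm_diff:
  fixes a b :: "'a::real_inner"
  shows "(norm (a - b))\<^sup>2 = (norm a)\<^sup>2 - 2 * inner a b + (norm b)\<^sup>2"
  by (simp add: power2_norm_eq_inner inner_diff_left inner_diff_right inner_commute)

lemma power2_norm_midpoint:
  fixes a b :: "'a::real_inner"
  shows "(norm ((1/2) *\<^sub>R (a + b)))\<^sup>2 = (norm a)\<^sup>2/2 + (norm b)\<^sup>2/2 - (norm (a - b))\<^sup>2/4"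
  by (simp add: power2_norm_eq_inner inner_add_left inner_add_right inner_diff_left inner_diff_right
      inner_commute algebra_simps) argo

lemma power2_norm_shift_center:
  fixes x d w :: "'a::real_inner"
  shows "(norm (x + d - (w - s *\<^sub>R d)))\<^sup>2 - (norm (x - (w - s *\<^sub>R d)))\<^sup>2
    = (norm (x + d - w))\<^sup>2 - (norm (x - w))\<^sup>2 + 2 * s * (norm d)\<^sup>2"
  by (simp add: power2_norm_eq_inner inner_add_left inner_add_right inner_diff_left
      inner_diff_right inner_commute algebra_simps)

lemma subspace_closure:
  fixes S :: "'a::real_normed_vector set"
  assumes "subspace S"
  shows "subspace (closure S)"
  unfolding subspace_def
proof (intro conjI ballI allI)
  show "0 \<in> closure S"
    using assms subspace_0 closure_subset by blast
next
  fix u v assume "u \<in> closure S" "v \<in> closure S"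
  then obtain a b where "\<And>n. a n \<in> S" "a \<longlonglongrightarrow> u" "\<And>n. b n \<in> S" "b \<longlonglongrightarrow> v"
    unfolding closure_sequential by metis
  then show "u + v \<in> closure S"
    unfolding closure_sequential using assms
    by (intro exI[of _ "\<lambda>n. a n + b n"]) (auto intro: tendsto_add subspace_add)
next
  fix c :: real and u assume "u \<in> closure S"
  then obtain a where "\<And>n. a n \<in> S" "a \<longlonglongrightarrow> u"
    unfolding closure_sequential by metis
  then show "c *\<^sub>R u \<in> closure S"
    unfolding closure_sequential using assms
    by (intro exI[of _ "\<lambda>n. c *\<^sub>R a n"]) (auto intro: tendsto_scaleR subspace_scale)
qed

text \<open>The parallelogram law makes minimizing sequences Cauchy; this yields orthogonal projections,
  the Riesz representation and proximity operators.\<close>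

lemma strongly_midconvex_minimizing_Cauchy:
  fixes F :: "'a::real_normed_vector \<Rightarrow> real"
  assumes lower: "\<And>w. w \<in> D \<Longrightarrow> m \<le> F w"
    and mid: "\<And>u v. u \<in> D \<Longrightarrow> v \<in> D \<Longrightarrow> (1/2) *\<^sub>R (u + v) \<in> D \<and>
                 F ((1/2) *\<^sub>R (u + v)) \<le> (F u + F v)/2 - (norm (u - v))\<^sup>2/8"
    and uD: "\<And>n. u n \<in> D" and uF: "\<And>n. F (u n) < m + (\<delta> n)\<^sup>2"
    and \<delta>: "\<And>n. 0 \<le> \<delta> n" "\<delta> \<longlonglongrightarrow> 0"
  shows "Cauchy u"
proof (rule Cauchy_if_dist_le_null[where h="\<lambda>n. 2 * \<delta> n"])
  show "dist (u n) (u k) \<le> 2 * \<delta> n + 2 * \<delta> k" for n k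
  proof -
    have "m \<le> F ((1/2) *\<^sub>R (u n + u k))"
      using mid[OF uD uD] lower by blast
    then have "(norm (u n - u k))\<^sup>2 \<le> 4 * ((\<delta> n)\<^sup>2 + (\<delta> k)\<^sup>2)"
      using mid[OF uD uD, of n k, THEN conjunct2] uF[of n] uF[of k] by argo
    moreover have "(2 * \<delta> n + 2 * \<delta> k)\<^sup>2 = 4 * ((\<delta> n)\<^sup>2 + (\<delta> k)\<^sup>2) + 8 * (\<delta> n * \<delta> k)"
      by (simp add: power2_eq_square algebra_simps)
    moreover have "0 \<le> \<delta> n * \<delta> k"
      using \<delta>(1) by simp
    ultimately have "(norm (u n - u k))\<^sup>2 \<le> (2 * \<delta> n + 2 * \<delta> k)\<^sup>2"
      by linarith
    then have "norm (u n - u k) \<le> 2 * \<delta> n + 2 * \<delta> k"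
      by (rule power2_le_imp_le) (use \<delta>(1)[of n] \<delta>(1)[of k] in simp)
    then show ?thesis
      by (simp add: dist_norm)
  qed
  show "(\<lambda>n. 2 * \<delta> n) \<longlonglongrightarrow> 0"
    using \<delta>(2) by (rule tendsto_mult_right_zero)
qed

lemma strongly_midconvex_has_minimizer:
  fixes F :: "'a::{real_normed_vector,complete_space} \<Rightarrow> real" and D :: "'a set"
  assumes "D \<noteq> {}" and bdd: "\<And>w. w \<in> D \<Longrightarrow> c0 \<le> F w"
    and closed: "\<And>c. closed {w\<in>D. F w \<le> c}"
    and mid: "\<And>u v. u \<in> D \<Longrightarrow> v \<in> D \<Longrightarrow> (1/2) *\<^sub>R (u + v) \<in> D \<and>
                 F ((1/2) *\<^sub>R (u + v)) \<le> (F u + F v)/2 - (norm (u - v))\<^sup>2/8"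
  obtains z where "z \<in> D" "\<And>w. w \<in> D \<Longrightarrow> F z \<le> F w"
proof -
  define m where "m = Inf (F ` D)"
  have m_le: "m \<le> F w" if "w \<in> D" for w
    unfolding m_def using bdd that by (intro cInf_lower bdd_belowI2) auto
  define \<delta> :: "nat \<Rightarrow> real" where "\<delta> n = inverse (real (Suc n))" for n
  have \<delta>_pos: "0 < \<delta> n" for n
    by (simp add: \<delta>_def)
  have \<delta>_lim: "\<delta> \<longlonglongrightarrow> 0"
    unfolding \<delta>_def by (rule LIMSEQ_inverse_real_of_nat)
  have "\<exists>w\<in>D. F w < m + (\<delta> n)\<^sup>2" for n
    using cInf_lessD[of "F ` D" "m + (\<delta> n)\<^sup>2"] \<delta>_pos[of n] \<open>D \<noteq> {}\<close> by (auto simp: m_def)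
  then obtain u where uD: "\<And>n. u n \<in> D" and uF: "\<And>n. F (u n) < m + (\<delta> n)\<^sup>2"
    by metis
  have "Cauchy u"
    using m_le mid uD uF less_imp_le[OF \<delta>_pos] \<delta>_lim by (rule strongly_midconvex_minimizing_Cauchy)
  then obtain z where z: "u \<longlonglongrightarrow> z"
    using Cauchy_convergent_iff convergent_def by blast
  have z_sublevel: "z \<in> {w\<in>D. F w \<le> c}" if "m < c" for c
  proof (rule Lim_in_closed_set[OF closed _ _ z])
    have "(\<lambda>n. m + (\<delta> n)\<^sup>2) \<longlonglongrightarrow> m + 0\<^sup>2"
      by (intro tendsto_intros \<delta>_lim)
    then have "\<forall>\<^sub>F n in sequentially. m + (\<delta> n)\<^sup>2 < c"
      using that by (simp add: order_tendsto_iff)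
    then show "\<forall>\<^sub>F n in sequentially. u n \<in> {w\<in>D. F w \<le> c}"
    proof eventually_elim
      case (elim n)
      then have "F (u n) \<le> c"
        using uF[of n] by linarith
      then show ?case
        using uD[of n] by simp
    qed
  qed simp
  have "F z \<le> m"
  proof (rule field_le_epsilon)
    fix e :: real assume "0 < e"
    then show "F z \<le> m + e"
      using z_sublevel[of "m + e"] by simp
  qed
  show ?thesis
  proof (rule that)
    show "z \<in> D"
      using z_sublevel[of "m + 1"] by simp
    show "F z \<le> F w" if "w \<in> D" for w
      using \<open>F z \<le> m\<close> m_le[OF that] by linarith
  qed
qed

lemma closed_subspace_nearest_point:
  fixes M :: "'a::{real_inner,complete_space} set"
  assumes sub: "subspace M" and "closed M"
  obtains m where "m \<in> M" "\<And>w. w \<in> M \<Longrightarrow> (norm (v - m))\<^sup>2 \<le> (norm (v - w))\<^sup>2"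
proof -
  define F where "F w = (norm (v - w))\<^sup>2 / 2" for w
  have "M \<noteq> {}"
    using subspace_0[OF sub] by blast
  moreover have "0 \<le> F w" if "w \<in> M" for w
    by (simp add: F_def)
  moreover have "closed {w\<in>M. F w \<le> c}" for c
  proof -
    have "closed {w. F w \<le> c}"
      unfolding F_def by (intro closed_Collect_le continuous_intros) auto
    moreover have "{w\<in>M. F w \<le> c} = M \<inter> {w. F w \<le> c}"
      by auto
    ultimately show ?thesis
      using \<open>closed M\<close> by (simp add: closed_Int)
  qed
  moreover have "(1/2) *\<^sub>R (u + w) \<in> M \<and> F ((1/2) *\<^sub>R (u + w)) \<le> (F u + F w)/2 - (norm (u - w))\<^sup>2/8"
    if "u \<in> M" "w \<in> M" for u w
  proof -
    have mid: "v - (1/2) *\<^sub>R (u + w) = (1/2) *\<^sub>R ((v - u) + (v - w))"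
      by (simp add: algebra_simps flip: scaleR_add_right)
    have diff: "norm ((v - u) - (v - w)) = norm (u - w)"
      by (simp add: norm_minus_commute)
    have "F ((1/2) *\<^sub>R (u + w)) = (F u + F w)/2 - (norm (u - w))\<^sup>2/8"
      unfolding F_def mid power2_norm_midpoint diff by argo
    then show ?thesis
      using that sub by (simp add: subspace_add subspace_scale)
  qed
  ultimately obtain m where m: "m \<in> M" "\<And>w. w \<in> M \<Longrightarrow> F m \<le> F w"
    by (rule strongly_midconvex_has_minimizer) auto
  then show ?thesis
    unfolding F_def by (intro that) auto
qed

lemma orthogonal_projection_exists:
  fixes M :: "'a::{real_inner,complete_space} set"
  assumes sub: "subspace M" and "closed M"
  obtains m where "m \<in> M" "\<And>w. w \<in> M \<Longrightarrow> inner (v - m) w = 0"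
proof -
  obtain m where m: "m \<in> M" "\<And>w. w \<in> M \<Longrightarrow> (norm (v - m))\<^sup>2 \<le> (norm (v - w))\<^sup>2"
    by (rule closed_subspace_nearest_point[OF assms]) auto
  have "inner (v - m) w = 0" if "w \<in> M" for w
  proof -
    have "0 \<le> t * (- 2 * inner (v - m) w) + t\<^sup>2 * (norm w)\<^sup>2" for t
    proof -
      have "(norm (v - m))\<^sup>2 \<le> (norm ((v - m) - t *\<^sub>R w))\<^sup>2"
        using m(2)[of "m + t *\<^sub>R w"] m(1) that sub by (simp add: subspace_add subspace_scale diff_diff_eq)
      then show ?thesis
        by (simp add: power2_norm_diff power_mult_distrib)
    qed
    then have "- 2 * inner (v - m) w = 0"
      by (rule quadratic_nonneg_imp_linear_coeff_zero)
    then show ?thesis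
      by simp
  qed
  then show ?thesis
    by (rule that[OF m(1)])
qed

lemma riesz_representation:
  fixes L :: "'a::{real_inner,complete_space} \<Rightarrow> real"
  assumes L: "bounded_linear L"
  obtains z where "\<And>v. L v = inner z v"
proof -
  interpret L: bounded_linear L by (fact L)
  obtain K where K: "\<And>w. norm (L w) \<le> norm w * K"
    using L.bounded by blast
  define F where "F w = (norm w)\<^sup>2 / 2 - L w" for w
  have "UNIV \<noteq> {}"
    by simp
  moreover have "- K\<^sup>2 / 2 \<le> F w" if "w \<in> UNIV" for w
  proof -
    have "0 \<le> (norm w - K)\<^sup>2"
      by simp
    then show ?thesis
      using K[of w] unfolding F_def by (simp add: power2_diff algebra_simps)
  qed
  moreover have "closed {w\<in>UNIV. F w \<le> c}" for c
    unfolding F_def by (auto intro!: closed_Collect_le continuous_intros L.continuous_on)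
  moreover have "(1/2) *\<^sub>R (u + w) \<in> UNIV \<and> F ((1/2) *\<^sub>R (u + w)) \<le> (F u + F w)/2 - (norm (u - w))\<^sup>2/8"
    if "u \<in> UNIV" "w \<in> UNIV" for u w
    unfolding F_def power2_norm_midpoint by (simp add: L.add L.scaleR) argo
  ultimately obtain z where "z \<in> UNIV" and z: "\<And>w. w \<in> UNIV \<Longrightarrow> F z \<le> F w"
    by (rule strongly_midconvex_has_minimizer) auto
  have "L v = inner z v" for v
  proof -
    have "0 \<le> t * (inner z v - L v) + t\<^sup>2 * ((norm v)\<^sup>2 / 2)" for t
      using z[of "z + t *\<^sub>R v", OF UNIV_I]
      unfolding F_def power2_norm_add by (simp add: L.add L.scaleR power_mult_distrib algebra_simps)
    then have "inner z v - L v = 0"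
      by (rule quadratic_nonneg_imp_linear_coeff_zero)
    then show ?thesis
      by simp
  qed
  then show ?thesis
    by (rule that)
qed

subsection \<open>Weak sequential compactness\<close>

lemma bounded_subseq_inner_convergent:
  fixes x :: "nat \<Rightarrow> 'a::real_inner"
  assumes bound: "\<And>n. norm (x n) \<le> B"
  obtains r where "strict_mono r" "\<And>m. convergent (\<lambda>k. inner (x (r k)) (x m))"
proof -
  interpret subseqs "\<lambda>m s. convergent (\<lambda>k. inner (x (s k)) (x m))"
  proof
    fix m and s :: "nat \<Rightarrow> nat"
    have "norm (inner (x (s k)) (x m)) \<le> B * B" for k
      using Cauchy_Schwarz_ineq2[of "x (s k)" "x m"] bound[of "s k"] bound[of m]
      by (simp add: mult_mono' order_trans)
    then have "bounded (range (\<lambda>k. inner (x (s k)) (x m)))"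
      unfolding bounded_iff by blast
    then obtain l r' where "strict_mono r'" "((\<lambda>k. inner (x (s k)) (x m)) \<circ> r') \<longlonglongrightarrow> l"
      using bounded_imp_convergent_subsequence by blast
    then show "\<exists>r'. strict_mono r' \<and> convergent (\<lambda>k. inner (x ((s \<circ> r') k)) (x m))"
      unfolding convergent_def by (auto simp: o_def)
  qed
  have "convergent (\<lambda>k. inner (x (diagseq k)) (x m))" for m
  proof -
    have "convergent (\<lambda>k. inner (x ((diagseq \<circ> (+) (Suc m)) k)) (x m))"
      by (rule diagseq_holds) (auto dest: convergent_subseq_convergent simp: o_def)
    then show ?thesis
      using convergent_ignore_initial_segment[of "\<lambda>k. inner (x (diagseq k)) (x m)" "Suc m"]
      by (simp add: o_def add.commute)
  qed
  then show ?thesis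
    by (rule that[OF subseq_diagseq])
qed

lemma subspace_inner_convergence_set:
  fixes y :: "nat \<Rightarrow> 'a::real_inner"
  shows "subspace {v. convergent (\<lambda>k. inner (y k) v)}"
  unfolding subspace_def
  by (auto simp: inner_add_right convergent_add convergent_const intro!: convergent_mult)

lemma closed_inner_convergence_set:
  fixes y :: "nat \<Rightarrow> 'a::real_inner"
  assumes bound: "\<And>n. norm (y n) \<le> B"
  shows "closed {v. convergent (\<lambda>k. inner (y k) v)}"
  unfolding closed_sequential_limits
proof (intro allI impI, elim conjE)
  fix vs v assume vs: "\<forall>n. vs n \<in> {v. convergent (\<lambda>k. inner (y k) v)}" and "vs \<longlonglongrightarrow> v"
  have B: "0 \<le> B"
    using bound[of 0] norm_ge_zero order_trans by blast
  have "Cauchy (\<lambda>k. inner (y k) v)"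
  proof (rule metric_CauchyI)
    fix e :: real assume e: "0 < e"
    define d where "d = e / (4 * (B + 1))"
    have "0 < d"
      using e B by (simp add: d_def)
    then obtain j where "\<forall>n\<ge>j. norm (vs n - v) < d"
      using LIMSEQ_D[OF \<open>vs \<longlonglongrightarrow> v\<close>] by blast
    then have j: "norm (v - vs j) < d"
      by (simp add: norm_minus_commute)
    have "Cauchy (\<lambda>k. inner (y k) (vs j))"
      using vs convergent_Cauchy by blast
    then obtain N where N: "\<And>m n. N \<le> m \<Longrightarrow> N \<le> n \<Longrightarrow> \<bar>inner (y m) (vs j) - inner (y n) (vs j)\<bar> < e / 2"
      using e unfolding Cauchy_def dist_real_def by (meson half_gt_zero)
    have "\<bar>inner (y m) v - inner (y n) v\<bar> < e" if "N \<le> m" "N \<le> n" for m n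
    proof -
      have "\<bar>inner (y m - y n) (v - vs j)\<bar> \<le> (2 * B) * d"
        using Cauchy_Schwarz_ineq2[of "y m - y n" "v - vs j"] j B
          norm_triangle_ineq4[of "y m" "y n"] bound[of m] bound[of n]
        by (smt (verit, best) mult_mono norm_ge_zero)
      also have "\<dots> < e / 2"
        using e B by (simp add: d_def field_simps)
      finally have "\<bar>inner (y m - y n) (v - vs j)\<bar> < e / 2" .
      moreover have "inner (y m) v - inner (y n) v
          = (inner (y m) (vs j) - inner (y n) (vs j)) + inner (y m - y n) (v - vs j)"
        by (simp add: inner_diff_left inner_diff_right)
      ultimately show ?thesis
        using N[OF that] abs_triangle_ineq[of "inner (y m) (vs j) - inner (y n) (vs j)"
            "inner (y m - y n) (v - vs j)"] by linarith
    qed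
    then show "\<exists>M. \<forall>m\<ge>M. \<forall>n\<ge>M. dist (inner (y m) v) (inner (y n) v) < e"
      unfolding dist_real_def by blast
  qed
  then show "v \<in> {v. convergent (\<lambda>k. inner (y k) v)}"
    by (simp add: real_Cauchy_convergent)
qed

lemma weakly_convergent_if_inner_convergent:
  fixes y :: "nat \<Rightarrow> 'a::{real_inner,complete_space}"
  assumes conv: "\<And>v. convergent (\<lambda>k. inner (y k) v)" and bound: "\<And>n. norm (y n) \<le> B"
  obtains z where "weakly_converges y z"
proof -
  define L where "L v = lim (\<lambda>k. inner (y k) v)" for v
  have L: "(\<lambda>k. inner (y k) v) \<longlonglongrightarrow> L v" for v
    using conv[of v] unfolding L_def by (simp add: convergent_LIMSEQ_iff)
  have "bounded_linear L"
  proof (rule bounded_linear_intro[where K=B])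
    show "L (u + v) = L u + L v" for u v
      using L[of "u + v"] tendsto_add[OF L[of u] L[of v]]
      by (simp add: inner_add_right LIMSEQ_unique)
    show "L (c *\<^sub>R u) = c *\<^sub>R L u" for c u
      using L[of "c *\<^sub>R u"] tendsto_mult_left[OF L[of u], of c]
      by (simp add: LIMSEQ_unique)
    show "norm (L u) \<le> norm u * B" for u
      unfolding real_norm_def
    proof (rule LIMSEQ_le_const2[OF tendsto_rabs[OF L[of u]]])
      show "\<exists>N. \<forall>n\<ge>N. \<bar>inner (y n) u\<bar> \<le> norm u * B"
        using Cauchy_Schwarz_ineq2 bound by (metis mult.commute mult_left_mono norm_ge_zero order_trans)
    qed
  qed
  then obtain z where z: "\<And>v. L v = inner z v"
    by (rule riesz_representation) auto
  have "weakly_converges y z"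
    unfolding weakly_converges_def using L by (simp add: z)
  then show ?thesis
    by (rule that)
qed

lemma bounded_weakly_convergent_subseq:
  fixes x :: "nat \<Rightarrow> 'a::{real_inner,complete_space}"
  assumes bound: "\<And>n. norm (x n) \<le> B"
  obtains r z where "strict_mono r" "weakly_converges (x \<circ> r) z"
proof -
  obtain r where r: "strict_mono r" "\<And>m. convergent (\<lambda>k. inner (x (r k)) (x m))"
    by (rule bounded_subseq_inner_convergent[of x B, OF bound]) auto
  define V where "V = {v. convergent (\<lambda>k. inner (x (r k)) v)}"
  define M where "M = closure (span (range x))"
  have "span (range x) \<subseteq> V"
    using r(2) subspace_inner_convergence_set unfolding V_def by (intro span_minimal) auto
  moreover have "closed V"
    unfolding V_def by (rule closed_inner_convergence_set[of "\<lambda>k. x (r k)" B]) (rule bound)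
  ultimately have "M \<subseteq> V"
    unfolding M_def by (rule closure_minimal)
  have xM: "x (r k) \<in> M" for k
    using closure_subset[of "span (range x)"] span_base[of "x (r k)" "range x"] unfolding M_def by auto
  have "v \<in> V" for v
  proof -
    obtain m where m: "m \<in> M" "\<And>w. w \<in> M \<Longrightarrow> inner (v - m) w = 0"
      unfolding M_def by (rule orthogonal_projection_exists[OF subspace_closure[OF subspace_span] closed_closure]) auto
    then have "inner (x (r k)) v = inner (x (r k)) m" for k
      using m(2)[OF xM[of k]] by (simp add: inner_commute inner_diff_left)
    moreover have "m \<in> V"
      using \<open>M \<subseteq> V\<close> m(1) by (rule subsetD)
    ultimately show "v \<in> V"
      unfolding V_def by simp
  qed
  then have "convergent (\<lambda>k. inner ((x \<circ> r) k) v)" for v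
    unfolding V_def by simp
  then obtain z where "weakly_converges (x \<circ> r) z"
    by (rule weakly_convergent_if_inner_convergent[of "x \<circ> r" B]) (use bound in auto)
  then show ?thesis
    by (rule that[OF r(1)])
qed

subsection \<open>Quasi-Fejer sequences\<close>

lemma weak_cluster_points_eq:
  fixes x :: "nat \<Rightarrow> 'a::real_inner"
  assumes "convergent (\<lambda>n. (norm (x n - z1))\<^sup>2)" "convergent (\<lambda>n. (norm (x n - z2))\<^sup>2)"
    and r: "strict_mono r" "weakly_converges (x \<circ> r) z1"
    and s: "strict_mono s" "weakly_converges (x \<circ> s) z2"
  shows "z1 = z2"
proof -
  define h where "h n = inner (x n) (z1 - z2)" for n
  have h: "h = (\<lambda>n. ((norm (x n - z2))\<^sup>2 - (norm (x n - z1))\<^sup>2 + (norm z1)\<^sup>2 - (norm z2)\<^sup>2) / 2)"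
    unfolding h_def power2_norm_diff by (simp add: fun_eq_iff inner_diff_right field_simps)
  obtain a1 a2 where "(\<lambda>n. (norm (x n - z1))\<^sup>2) \<longlonglongrightarrow> a1" "(\<lambda>n. (norm (x n - z2))\<^sup>2) \<longlonglongrightarrow> a2"
    using assms(1,2) unfolding convergent_def by blast
  then have l: "h \<longlonglongrightarrow> (a2 - a1 + (norm z1)\<^sup>2 - (norm z2)\<^sup>2) / 2"
    unfolding h by (intro tendsto_intros) auto
  have "(h \<circ> r) \<longlonglongrightarrow> inner z1 (z1 - z2)" "(h \<circ> s) \<longlonglongrightarrow> inner z2 (z1 - z2)"
    using r(2) s(2) unfolding weakly_converges_def h_def by (simp_all add: o_def)
  moreover have "(h \<circ> r) \<longlonglongrightarrow> (a2 - a1 + (norm z1)\<^sup>2 - (norm z2)\<^sup>2) / 2"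
    "(h \<circ> s) \<longlonglongrightarrow> (a2 - a1 + (norm z1)\<^sup>2 - (norm z2)\<^sup>2) / 2"
    using l r(1) s(1) by (simp_all add: LIMSEQ_subseq_LIMSEQ)
  ultimately have "inner (z1 - z2) (z1 - z2) = 0"
    by (metis LIMSEQ_unique diff_self inner_diff_left)
  then show ?thesis
    by simp
qed

lemma opial:
  fixes x :: "nat \<Rightarrow> 'a::{real_inner,complete_space}" and S :: "'a set"
  assumes bound: "\<And>n. norm (x n) \<le> B"
    and conv: "\<And>z. z \<in> S \<Longrightarrow> convergent (\<lambda>n. (norm (x n - z))\<^sup>2)"
    and cluster: "\<And>r z. strict_mono r \<Longrightarrow> weakly_converges (x \<circ> r) z \<Longrightarrow> z \<in> S"
  shows "\<exists>z\<in>S. weakly_converges x z"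
proof -
  obtain r z where r: "strict_mono r" "weakly_converges (x \<circ> r) z"
    by (rule bounded_weakly_convergent_subseq[of x B, OF bound]) auto
  have "z \<in> S"
    using cluster[OF r] .
  have "(\<lambda>n. inner (x n) y) \<longlonglongrightarrow> inner z y" for y
  proof (rule ccontr)
    assume "\<not> (\<lambda>n. inner (x n) y) \<longlonglongrightarrow> inner z y"
    then obtain d and s :: "nat \<Rightarrow> nat" where d: "0 < d" and s: "strict_mono s"
      and away: "\<And>k. d \<le> \<bar>inner (x (s k)) y - inner z y\<bar>"
      by (rule not_tendsto_imp_subseq_away) auto
    obtain r' z' where r': "strict_mono r'" "weakly_converges ((x \<circ> s) \<circ> r') z'"
      by (rule bounded_weakly_convergent_subseq[of "x \<circ> s" B]) (use bound in auto)
    have sr': "strict_mono (s \<circ> r')" "weakly_converges (x \<circ> (s \<circ> r')) z'"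
      using s r' by (simp_all add: strict_mono_o o_assoc)
    have "z = z'"
      using weak_cluster_points_eq[OF conv[OF \<open>z \<in> S\<close>] conv[OF cluster[OF sr']] r sr'] .
    then have "(\<lambda>k. inner (x (s (r' k))) y) \<longlonglongrightarrow> inner z y"
      using sr'(2) unfolding weakly_converges_def by simp
    then have "(\<lambda>k. \<bar>inner (x (s (r' k))) y - inner z y\<bar>) \<longlonglongrightarrow> 0"
      by (intro tendsto_rabs_zero LIM_zero)
    moreover have "\<exists>N. \<forall>k\<ge>N. d \<le> \<bar>inner (x (s (r' k))) y - inner z y\<bar>"
      using away by blast
    ultimately have "d \<le> 0"
      by (rule LIMSEQ_le_const)
    then show False
      using d by simp
  qed
  then show ?thesis
    using \<open>z \<in> S\<close> unfolding weakly_converges_def by blast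
qed

text \<open>If a ball of radius \<open>\<rho>\<close> consists of points to which \<open>x'\<close> is not much farther than \<open>x\<close>,
  test this against the point of the ball on the far side of the move \<open>x' - x\<close>.\<close>

lemma quasi_fejer_ball_step:
  fixes x x' w :: "'a::real_inner"
  assumes "ball w \<rho> \<subseteq> S" "0 < \<rho>"
    and fejer: "\<And>z. z \<in> S \<Longrightarrow> norm (x' - z) \<le> norm (x - z) + e"
    and "0 \<le> e" "e \<le> E" "norm (x - w) \<le> M"
  shows "\<rho> * norm (x' - x) \<le> (norm (x - w))\<^sup>2 - (norm (x' - w))\<^sup>2 + (2 * (M + \<rho>) + E) * e"
proof (cases "x' = x")
  case True
  have "0 \<le> M"
    using assms(6) norm_ge_zero order_trans by blast
  then show ?thesis
    using True assms by simp
next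
  case False
  define d where "d = x' - x"
  define s where "s = \<rho> / (2 * norm d)"
  have "norm d > 0"
    using False by (simp add: d_def)
  then have "norm (s *\<^sub>R d) = \<rho> / 2"
    using \<open>0 < \<rho>\<close> by (simp add: s_def)
  then have "w - s *\<^sub>R d \<in> S"
    using assms(1,2) by (auto simp: dist_norm)
  moreover have "norm (x - (w - s *\<^sub>R d)) \<le> M + \<rho>"
    using norm_triangle_ineq[of "x - w" "s *\<^sub>R d"] \<open>norm (s *\<^sub>R d) = \<rho> / 2\<close> assms(2,6)
    by (simp add: algebra_simps)
  ultimately have "(norm (x' - (w - s *\<^sub>R d)))\<^sup>2 \<le> (norm (x - (w - s *\<^sub>R d)))\<^sup>2 + (2 * (M + \<rho>) + E) * e"
    using fejer assms(4,5) by (intro power2_le_add_bounded) auto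
  moreover have "2 * s * (norm d)\<^sup>2 = \<rho> * norm d"
    using \<open>norm d > 0\<close> by (simp add: s_def power2_eq_square)
  ultimately show ?thesis
    using power2_norm_shift_center[of x d w s] by (simp add: d_def)
qed

lemma quasi_fejer_ball_summable_steps:
  fixes x :: "nat \<Rightarrow> 'a::real_inner"
  assumes ball: "ball w \<rho> \<subseteq> S" "0 < \<rho>"
    and fejer: "\<And>z n. z \<in> S \<Longrightarrow> norm (x (Suc n) - z) \<le> norm (x n - z) + e n"
    and e: "\<And>n. 0 \<le> e n" "summable e"
  shows "summable (\<lambda>n. norm (x (Suc n) - x n))"
proof -
  have "w \<in> S"
    using ball by auto
  then have "convergent (\<lambda>n. norm (x n - w))"
    using fejer e by (intro quasi_fejer_convergent) auto
  then obtain M where M: "\<And>n. norm (x n - w) \<le> M"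
    using convergent_imp_Bseq by (metis BseqE real_norm_def abs_le_D1 norm_ge_zero abs_of_nonneg)
  have e_le: "e n \<le> suminf e" for n
    using sum_le_suminf[OF e(2), of "{n}"] e(1) by simp
  have "summable (\<lambda>n. \<rho> * norm (x (Suc n) - x n))"
  proof (rule summable_by_telescoping[where a="\<lambda>n. (norm (x n - w))\<^sup>2" and d="\<lambda>n. (2 * (M + \<rho>) + suminf e) * e n"])
    show "(norm (x (Suc n) - w))\<^sup>2 \<le> (norm (x n - w))\<^sup>2 - \<rho> * norm (x (Suc n) - x n) + (2 * (M + \<rho>) + suminf e) * e n" for n
    proof -
      have "\<rho> * norm (x (Suc n) - x n)
          \<le> (norm (x n - w))\<^sup>2 - (norm (x (Suc n) - w))\<^sup>2 + (2 * (M + \<rho>) + suminf e) * e n"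
        by (rule quasi_fejer_ball_step[OF ball fejer e(1) e_le M])
      then show ?thesis
        by linarith
    qed
    have "0 \<le> M"
      using M[of 0] norm_ge_zero order_trans by blast
    then show "0 \<le> (2 * (M + \<rho>) + suminf e) * e n" for n
      using ball(2) e by (simp add: suminf_nonneg)
  qed (use ball(2) e(2) in \<open>auto intro: summable_mult\<close>)
  then show ?thesis
    using ball(2) summable_mult[of _ "1 / \<rho>"] by fastforce
qed

lemma weakly_converges_inner:
  assumes "weakly_converges y z"
  shows "(\<lambda>n. inner w (y n)) \<longlonglongrightarrow> inner w z"
  using assms unfolding weakly_converges_def by (simp add: inner_commute)

lemma weakly_converges_diff_null:
  assumes "weakly_converges x z" "(\<lambda>n. y n - x n) \<longlonglongrightarrow> 0"
  shows "weakly_converges y z"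
  unfolding weakly_converges_def
proof
  fix w
  have "(\<lambda>n. inner (x n) w) \<longlonglongrightarrow> inner z w"
    using assms(1) unfolding weakly_converges_def by blast
  moreover have "(\<lambda>n. inner (y n - x n) w) \<longlonglongrightarrow> inner 0 w"
    using assms(2) by (intro tendsto_inner tendsto_const)
  ultimately have "(\<lambda>n. inner (x n) w + inner (y n - x n) w) \<longlonglongrightarrow> inner z w + inner 0 w"
    by (rule tendsto_add)
  then show "(\<lambda>n. inner (y n) w) \<longlonglongrightarrow> inner z w"
    by (simp add: inner_diff_left)
qed

lemma weakly_converges_tendsto_eq:
  fixes x :: "nat \<Rightarrow> 'a::real_inner"
  assumes "x \<longlonglongrightarrow> l" "weakly_converges x z"
  shows "l = z"
proof -
  have "(\<lambda>n. inner (x n) (l - z)) \<longlonglongrightarrow> inner l (l - z)"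
    using assms(1) by (intro tendsto_intros)
  then have "inner l (l - z) = inner z (l - z)"
    using assms(2) LIMSEQ_unique unfolding weakly_converges_def by blast
  then have "inner (l - z) (l - z) = 0"
    by (simp add: inner_diff_left)
  then show ?thesis
    by simp
qed

lemma tendsto_inner_zero_bounded:
  fixes a b :: "nat \<Rightarrow> 'a::real_inner"
  assumes "a \<longlonglongrightarrow> 0" "\<And>n. norm (b n) \<le> C"
  shows "(\<lambda>n. inner (a n) (b n)) \<longlonglongrightarrow> 0"
proof (rule Lim_null_comparison)
  have "norm (inner (a n) (b n)) \<le> C * norm (a n)" for n
  proof -
    have "norm (inner (a n) (b n)) \<le> norm (a n) * norm (b n)"
      using Cauchy_Schwarz_ineq2 by simp
    also have "\<dots> \<le> norm (a n) * C"
      using assms(2) by (intro mult_left_mono) auto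
    finally show ?thesis
      by (simp add: mult.commute)
  qed
  then show "\<forall>\<^sub>F n in sequentially. norm (inner (a n) (b n)) \<le> C * norm (a n)"
    by simp
  show "(\<lambda>n. C * norm (a n)) \<longlonglongrightarrow> 0"
    using assms(1) by (intro tendsto_mult_right_zero) (simp add: tendsto_norm_zero)
qed

section \<open>Convex functions with Lipschitz gradient\<close>

lemma has_real_derivative_along_line:
  fixes g :: "'a::real_normed_vector \<Rightarrow> real"
  assumes "(g has_derivative D) (at (x + s *\<^sub>R h))"
  shows "((\<lambda>t. g (x + t *\<^sub>R h)) has_real_derivative D h) (at s)"
proof -
  have line: "((\<lambda>t. x + t *\<^sub>R h) has_derivative (\<lambda>t. t *\<^sub>R h)) (at s)"
    by (auto intro!: derivative_eq_intros)
  have "D (t *\<^sub>R h) = D h * t" for t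
    using linear_scale[OF has_derivative_linear[OF assms]] by simp
  then have "((\<lambda>t. g (x + t *\<^sub>R h)) has_derivative (\<lambda>t. D h * t)) (at s)"
    using has_derivative_compose[OF line assms] by simp
  then show ?thesis
    by (simp add: has_field_derivative_def)
qed

lemma difference_quotient_tendsto_at_right:
  fixes g :: "'a::real_normed_vector \<Rightarrow> real"
  assumes "(g has_derivative D) (at x)"
  shows "((\<lambda>t. (g (x + t *\<^sub>R h) - g x) / t) \<longlongrightarrow> D h) (at_right 0)"
proof -
  have "((\<lambda>t. g (x + t *\<^sub>R h)) has_real_derivative D h) (at 0)"
    using assms by (intro has_real_derivative_along_line) simp
  then have "((\<lambda>t. (g (x + t *\<^sub>R h) - g x) / t) \<longlongrightarrow> D h) (at 0)"
    by (simp add: DERIV_def)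
  then show ?thesis
    by (rule filterlim_mono) (auto simp: at_le)
qed

lemma convex_above_tangent:
  fixes g :: "'a::real_inner \<Rightarrow> real"
  assumes convex: "convex_on UNIV g" and deriv: "(g has_derivative (\<lambda>h. inner v h)) (at x)"
  shows "g x + inner v (y - x) \<le> g y"
proof -
  have "\<forall>\<^sub>F t in at_right 0. (g (x + t *\<^sub>R (y - x)) - g x) / t \<le> g y - g x"
    unfolding eventually_at_right_field
  proof (intro exI[of _ 1] conjI allI impI)
    fix t :: real assume t: "0 < t" "t < 1"
    have "g ((1 - t) *\<^sub>R x + t *\<^sub>R y) \<le> (1 - t) * g x + t * g y"
      using convex t unfolding convex_on_def by auto
    moreover have "x + t *\<^sub>R (y - x) = (1 - t) *\<^sub>R x + t *\<^sub>R y"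
      by (simp add: algebra_simps)
    ultimately have "g (x + t *\<^sub>R (y - x)) - g x \<le> t * (g y - g x)"
      by (simp add: algebra_simps)
    then show "(g (x + t *\<^sub>R (y - x)) - g x) / t \<le> g y - g x"
      using t by (simp add: divide_le_eq mult.commute)
  qed simp
  then have "inner v (y - x) \<le> g y - g x"
    using tendsto_upperbound[OF difference_quotient_tendsto_at_right[OF deriv]] by simp
  then show ?thesis
    by simp
qed

lemma descent_lemma:
  fixes g :: "'a::real_inner \<Rightarrow> real"
  assumes deriv: "\<And>y. (g has_derivative (\<lambda>h. inner (G y) h)) (at y)"
    and lip: "\<And>y z. norm (G y - G z) \<le> (1 / \<beta>) * norm (y - z)" and "0 < \<beta>"
  shows "g y \<le> g x + inner (G x) (y - x) + (norm (y - x))\<^sup>2 / (2 * \<beta>)"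
proof -
  define h where "h = y - x"
  define \<phi> where "\<phi> t = g (x + t *\<^sub>R h) - t * inner (G x) h - t\<^sup>2 * ((norm h)\<^sup>2 / (2 * \<beta>))" for t
  have "\<phi> 1 \<le> \<phi> 0"
  proof (rule DERIV_nonpos_imp_nonincreasing[of 0 1 \<phi>])
    fix s :: real assume s: "0 \<le> s" "s \<le> 1"
    have "(\<phi> has_real_derivative
        inner (G (x + s *\<^sub>R h)) h - inner (G x) h - 2 * s * ((norm h)\<^sup>2 / (2 * \<beta>))) (at s)"
      unfolding \<phi>_def
      by (intro DERIV_diff has_real_derivative_along_line[OF deriv] DERIV_cmult_right DERIV_cmult_Id)
        (auto intro!: derivative_eq_intros)
    moreover have "inner (G (x + s *\<^sub>R h) - G x) h \<le> 2 * s * ((norm h)\<^sup>2 / (2 * \<beta>))"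
    proof -
      have "inner (G (x + s *\<^sub>R h) - G x) h \<le> norm (G (x + s *\<^sub>R h) - G x) * norm h"
        by (rule real_inner_class.Cauchy_Schwarz_ineq2[THEN abs_le_D1])
      also have "\<dots> \<le> ((1 / \<beta>) * norm (s *\<^sub>R h)) * norm h"
        using lip[of "x + s *\<^sub>R h" x] by (intro mult_right_mono) auto
      also have "\<dots> = 2 * s * ((norm h)\<^sup>2 / (2 * \<beta>))"
        using s \<open>0 < \<beta>\<close> by (simp add: power2_eq_square)
      finally show ?thesis .
    qed
    ultimately show "\<exists>y. (\<phi> has_real_derivative y) (at s) \<and> y \<le> 0"
      by (force simp: inner_diff_left)
  qed simp
  then show ?thesis
    unfolding \<phi>_def h_def by simp
qed

lemma convex_lipschitz_gradient_lower_bound: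
  fixes g :: "'a::real_inner \<Rightarrow> real"
  assumes convex: "convex_on UNIV g" and deriv: "\<And>y. (g has_derivative (\<lambda>h. inner (G y) h)) (at y)"
    and lip: "\<And>y z. norm (G y - G z) \<le> (1 / \<beta>) * norm (y - z)" and "0 < \<beta>"
  shows "g x + inner (G x) (y - x) + \<beta> / 2 * (norm (G y - G x))\<^sup>2 \<le> g y"
proof -
  define d where "d = G y - G x"
  define w where "w = y - \<beta> *\<^sub>R d"
  have "g x + inner (G x) (w - x) \<le> g w"
    by (rule convex_above_tangent[OF convex deriv])
  moreover have "g w \<le> g y + inner (G y) (w - y) + (norm (w - y))\<^sup>2 / (2 * \<beta>)"
    by (rule descent_lemma[OF deriv lip \<open>0 < \<beta>\<close>])
  moreover have "inner (G x) (w - x) = inner (G x) (y - x) - \<beta> * inner (G x) d"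
    unfolding w_def by (simp add: inner_diff_right algebra_simps)
  moreover have "inner (G y) (w - y) = - (\<beta> * inner (G y) d)"
    unfolding w_def by simp
  moreover have "(norm (w - y))\<^sup>2 / (2 * \<beta>) = (\<beta> * (norm d)\<^sup>2) / 2"
    unfolding w_def using \<open>0 < \<beta>\<close> by (simp add: power2_eq_square)
  moreover have "\<beta> * inner (G y) d - \<beta> * inner (G x) d = \<beta> * (norm d)\<^sup>2"
    unfolding d_def by (simp add: inner_diff_left power2_norm_eq_inner flip: right_diff_distrib)
  moreover have "\<beta> / 2 * (norm (G y - G x))\<^sup>2 = (\<beta> * (norm d)\<^sup>2) / 2"
    by (simp add: d_def)
  ultimately show ?thesis
    by linarith
qed

lemma baillon_haddad:
  fixes g :: "'a::real_inner \<Rightarrow> real"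
  assumes "convex_on UNIV g" and "\<And>y. (g has_derivative (\<lambda>h. inner (G y) h)) (at y)"
    and "\<And>y z. norm (G y - G z) \<le> (1 / \<beta>) * norm (y - z)" and "0 < \<beta>"
  shows "\<beta> * (norm (G x - G y))\<^sup>2 \<le> inner (G x - G y) (x - y)"
  using convex_lipschitz_gradient_lower_bound[OF assms, of x y]
    convex_lipschitz_gradient_lower_bound[OF assms, of y x]
  by (simp add: norm_minus_commute inner_diff_left inner_diff_right algebra_simps)

lemma cocoercive_weak_strong_closed:
  fixes G :: "'a::real_inner \<Rightarrow> 'a"
  assumes coco: "\<And>x y. \<beta> * (norm (G x - G y))\<^sup>2 \<le> inner (G x - G y) (x - y)" and "0 < \<beta>"
    and bound: "\<And>n. norm (y n) \<le> B" and weak: "weakly_converges y z"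
    and lim: "(\<lambda>n. G (y n)) \<longlonglongrightarrow> v"
  shows "G z = v"
proof -
  have "(\<lambda>n. inner (G (y n) - v) (y n - z) + inner (v - G z) (y n - z)) \<longlonglongrightarrow> 0 + (inner (v - G z) z - inner (v - G z) z)"
  proof (intro tendsto_add tendsto_inner_zero_bounded)
    show "(\<lambda>n. G (y n) - v) \<longlonglongrightarrow> 0"
      using lim by (simp add: LIM_zero)
    show "norm (y n - z) \<le> B + norm z" for n
      using bound[of n] norm_triangle_ineq4[of "y n" z] by linarith
    show "(\<lambda>n. inner (v - G z) (y n - z)) \<longlonglongrightarrow> inner (v - G z) z - inner (v - G z) z"
      unfolding inner_diff_right by (intro tendsto_diff weakly_converges_inner[OF weak] tendsto_const)
  qed
  then have "(\<lambda>n. inner (G (y n) - G z) (y n - z)) \<longlonglongrightarrow> 0"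
    by (simp add: inner_diff_left)
  moreover have "(\<lambda>n. \<beta> * (norm (G (y n) - G z))\<^sup>2) \<longlonglongrightarrow> \<beta> * (norm (v - G z))\<^sup>2"
    by (intro tendsto_intros lim)
  ultimately have "\<beta> * (norm (v - G z))\<^sup>2 \<le> 0"
    using coco by (intro tendsto_le[OF trivial_limit_sequentially]) auto
  then show ?thesis
    using \<open>0 < \<beta>\<close> by (simp add: mult_le_0_iff)
qed

section \<open>Subdifferentials and proximity operators\<close>

lemma proper_fun_finite_eq:
  assumes "proper_fun f" "f y \<noteq> \<infinity>"
  shows "f y = ereal (real_of_ereal (f y))"
  using assms unfolding proper_fun_def by (cases "f y") auto

lemma proper_fun_le_ereal:
  assumes "proper_fun f" "f y \<le> ereal c"
  shows "f y \<noteq> \<infinity> \<and> real_of_ereal (f y) \<le> c"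
  using assms unfolding proper_fun_def by (cases "f y") auto

lemma convex_funD_real:
  fixes f :: "'a::real_vector \<Rightarrow> ereal"
  assumes pf: "proper_fun f" and "convex_fun f" and u: "f u \<noteq> \<infinity>" and w: "f w \<noteq> \<infinity>"
    and "0 < t" "t < 1"
  shows "f (t *\<^sub>R u + (1 - t) *\<^sub>R w) \<noteq> \<infinity> \<and>
    real_of_ereal (f (t *\<^sub>R u + (1 - t) *\<^sub>R w)) \<le> t * real_of_ereal (f u) + (1 - t) * real_of_ereal (f w)"
proof -
  have "f (t *\<^sub>R u + (1 - t) *\<^sub>R w) \<le> ereal t * f u + ereal (1 - t) * f w"
    using assms unfolding convex_fun_def by blast
  also have "\<dots> = ereal (t * real_of_ereal (f u) + (1 - t) * real_of_ereal (f w))"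
    by (subst proper_fun_finite_eq[OF pf u], subst proper_fun_finite_eq[OF pf w]) simp
  finally show ?thesis
    by (rule proper_fun_le_ereal[OF pf])
qed

lemma subdiff_iff_real:
  fixes f :: "'a::real_inner \<Rightarrow> ereal"
  assumes pf: "proper_fun f"
  shows "u \<in> subdiff f p \<longleftrightarrow> f p \<noteq> \<infinity> \<and>
    (\<forall>y. f y \<noteq> \<infinity> \<longrightarrow> real_of_ereal (f p) + inner (y - p) u \<le> real_of_ereal (f y))"
proof
  assume u: "u \<in> subdiff f p"
  obtain y0 where "f y0 \<noteq> \<infinity>"
    using pf unfolding proper_fun_def by blast
  then have fp: "f p \<noteq> \<infinity>"
    using u unfolding subdiff_def by force
  show "f p \<noteq> \<infinity> \<and> (\<forall>y. f y \<noteq> \<infinity> \<longrightarrow> real_of_ereal (f p) + inner (y - p) u \<le> real_of_ereal (f y))"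
  proof (intro conjI allI impI fp)
    fix y assume fy: "f y \<noteq> \<infinity>"
    have "ereal (inner (y - p) u) + f p \<le> f y"
      using u unfolding subdiff_def by blast
    then show "real_of_ereal (f p) + inner (y - p) u \<le> real_of_ereal (f y)"
      by (subst (asm) proper_fun_finite_eq[OF pf fp], subst (asm) proper_fun_finite_eq[OF pf fy]) simp
  qed
next
  assume real: "f p \<noteq> \<infinity> \<and> (\<forall>y. f y \<noteq> \<infinity> \<longrightarrow> real_of_ereal (f p) + inner (y - p) u \<le> real_of_ereal (f y))"
  show "u \<in> subdiff f p"
    unfolding subdiff_def
  proof (intro CollectI allI)
    fix y
    show "ereal (inner (y - p) u) + f p \<le> f y"
    proof (cases "f y = \<infinity>")
      case False
      have "f p \<noteq> \<infinity>" "real_of_ereal (f p) + inner (y - p) u \<le> real_of_ereal (f y)"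
        using real False by blast+
      then show ?thesis
        by (subst proper_fun_finite_eq[OF pf \<open>f p \<noteq> \<infinity>\<close>], subst proper_fun_finite_eq[OF pf False]) simp
    qed simp
  qed
qed

lemma subdiff_scaled_iff_real:
  fixes f :: "'a::real_inner \<Rightarrow> ereal"
  assumes pf: "proper_fun f" and "0 < \<gamma>"
  shows "(1 / \<gamma>) *\<^sub>R v \<in> subdiff f p \<longleftrightarrow> f p \<noteq> \<infinity> \<and>
    (\<forall>y. f y \<noteq> \<infinity> \<longrightarrow> \<gamma> * real_of_ereal (f p) + inner v (y - p) \<le> \<gamma> * real_of_ereal (f y))"
proof -
  have "real_of_ereal (f p) + inner (y - p) ((1 / \<gamma>) *\<^sub>R v) \<le> real_of_ereal (f y) \<longleftrightarrow>
      \<gamma> * real_of_ereal (f p) + inner v (y - p) \<le> \<gamma> * real_of_ereal (f y)" for y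
  proof -
    have "inner (y - p) ((1 / \<gamma>) *\<^sub>R v) = inner v (y - p) / \<gamma>"
      by (simp only: inner_scaleR_right inner_commute[of "y - p"]) simp
    then show ?thesis
      using \<open>0 < \<gamma>\<close> by (simp add: field_simps)
  qed
  then show ?thesis
    unfolding subdiff_iff_real[OF pf] by blast
qed

lemma subdiff_monotone:
  fixes f :: "'a::real_inner \<Rightarrow> ereal"
  assumes "proper_fun f" "u \<in> subdiff f p" "v \<in> subdiff f q"
  shows "0 \<le> inner (u - v) (p - q)"
proof -
  have "real_of_ereal (f p) + inner (q - p) u \<le> real_of_ereal (f q)"
    "real_of_ereal (f q) + inner (p - q) v \<le> real_of_ereal (f p)"
    using assms subdiff_iff_real by blast+
  then show ?thesis
    by (simp add: inner_diff_left inner_diff_right inner_commute)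
qed

lemma minimizer_imp_neg_gradient_subdiff:
  fixes f :: "'a::real_inner \<Rightarrow> ereal" and g :: "'a \<Rightarrow> real"
  assumes pf: "proper_fun f" and cf: "convex_fun f"
    and deriv: "(g has_derivative (\<lambda>h. inner v h)) (at z)"
    and min: "\<And>y. f z + ereal (g z) \<le> f y + ereal (g y)"
  shows "- v \<in> subdiff f z"
proof -
  obtain y0 where y0: "f y0 \<noteq> \<infinity>"
    using pf unfolding proper_fun_def by blast
  have fz: "f z \<noteq> \<infinity>"
  proof
    assume "f z = \<infinity>"
    then have "f y0 + ereal (g y0) = \<infinity>"
      using min by (metis PInfty_neq_ereal(1) ereal_infty_less_eq(1) ereal_plus_eq_PInfty)
    moreover have "f y0 + ereal (g y0) \<noteq> \<infinity>"
      by (subst proper_fun_finite_eq[OF pf y0]) simp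
    ultimately show False
      by simp
  qed
  have quot: "real_of_ereal (f z) - real_of_ereal (f y) \<le> inner v (y - z)" if fy: "f y \<noteq> \<infinity>" for y
  proof (rule tendsto_lowerbound[OF difference_quotient_tendsto_at_right[OF deriv]])
    show "\<forall>\<^sub>F t in at_right 0. real_of_ereal (f z) - real_of_ereal (f y) \<le> (g (z + t *\<^sub>R (y - z)) - g z) / t"
      unfolding eventually_at_right_field
    proof (intro exI[of _ 1] conjI allI impI)
      fix t :: real assume t: "0 < t" "t < 1"
      define yt where "yt = t *\<^sub>R y + (1 - t) *\<^sub>R z"
      have yt: "f yt \<noteq> \<infinity>"
        "real_of_ereal (f yt) \<le> t * real_of_ereal (f y) + (1 - t) * real_of_ereal (f z)"
        unfolding yt_def using convex_funD_real[OF pf cf fy fz t] by auto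
      have "real_of_ereal (f z) + g z \<le> real_of_ereal (f yt) + g yt"
        using min[of yt]
        by (subst (asm) proper_fun_finite_eq[OF pf fz], subst (asm) proper_fun_finite_eq[OF pf yt(1)]) simp
      moreover have "z + t *\<^sub>R (y - z) = yt"
        unfolding yt_def by (simp add: algebra_simps)
      ultimately show "real_of_ereal (f z) - real_of_ereal (f y) \<le> (g (z + t *\<^sub>R (y - z)) - g z) / t"
        using yt(2) t by (simp add: le_divide_eq algebra_simps)
    qed simp
  qed simp
  have "real_of_ereal (f z) + inner (y - z) (- v) \<le> real_of_ereal (f y)" if "f y \<noteq> \<infinity>" for y
  proof -
    have "inner (y - z) (- v) = - inner v (y - z)"
      by (simp add: inner_commute)
    then show ?thesis
      using quot[OF that] by linarith
  qed
  then show "- v \<in> subdiff f z"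
    using fz by (simp add: subdiff_iff_real[OF pf])
qed

lemma neg_gradient_subdiff_imp_minimizer:
  fixes f :: "'a::real_inner \<Rightarrow> ereal" and g :: "'a \<Rightarrow> real"
  assumes pf: "proper_fun f" and g: "convex_on UNIV g"
    and deriv: "(g has_derivative (\<lambda>h. inner v h)) (at z)" and "- v \<in> subdiff f z"
  shows "f z + ereal (g z) \<le> f y + ereal (g y)"
proof (cases "f y = \<infinity>")
  case False
  have fz: "f z \<noteq> \<infinity>"
    and sub: "real_of_ereal (f z) - inner (y - z) v \<le> real_of_ereal (f y)"
    using \<open>- v \<in> subdiff f z\<close> False by (auto simp: subdiff_iff_real[OF pf])
  have "g z + inner v (y - z) \<le> g y"
    by (rule convex_above_tangent[OF g deriv])
  then have "real_of_ereal (f z) + g z \<le> real_of_ereal (f y) + g y"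
    using sub by (simp add: inner_commute)
  then show ?thesis
    by (subst proper_fun_finite_eq[OF pf fz], subst proper_fun_finite_eq[OF pf False]) simp
qed simp

lemma minimizer_iff_neg_gradient_subdiff:
  fixes f :: "'a::real_inner \<Rightarrow> ereal" and g :: "'a \<Rightarrow> real"
  assumes pf: "proper_fun f" and cf: "convex_fun f" and g: "convex_on UNIV g"
    and deriv: "\<And>y. (g has_derivative (\<lambda>h. inner (G y) h)) (at y)"
  shows "(\<forall>y. f z + ereal (g z) \<le> f y + ereal (g y)) \<longleftrightarrow> - G z \<in> subdiff f z"
  using minimizer_imp_neg_gradient_subdiff[OF pf cf deriv]
    neg_gradient_subdiff_imp_minimizer[OF pf g deriv] by blast

lemma prox_eqI:
  fixes f :: "'a::real_inner \<Rightarrow> ereal"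
  assumes pf: "proper_fun f" and "0 < \<gamma>" and sub: "(1 / \<gamma>) *\<^sub>R (x - p) \<in> subdiff f p"
  shows "prox (\<lambda>y. ereal \<gamma> * f y) x = p"
proof -
  have fp: "f p \<noteq> \<infinity>"
    and vi: "\<And>y. f y \<noteq> \<infinity> \<Longrightarrow> \<gamma> * real_of_ereal (f p) + inner (x - p) (y - p) \<le> \<gamma> * real_of_ereal (f y)"
    using sub unfolding subdiff_scaled_iff_real[OF pf \<open>0 < \<gamma>\<close>] by blast+
  have norm_eq: "(norm (x - y))\<^sup>2 = (norm (x - p))\<^sup>2 - 2 * inner (x - p) (y - p) + (norm (y - p))\<^sup>2" for y
    using power2_norm_diff[of "x - p" "y - p"] by simp
  show ?thesis
    unfolding prox_def
  proof (rule the_equality)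
    show "\<forall>y. ereal \<gamma> * f p + ereal ((1/2) * (norm (x - p))\<^sup>2) \<le> ereal \<gamma> * f y + ereal ((1/2) * (norm (x - y))\<^sup>2)"
    proof
      fix y
      show "ereal \<gamma> * f p + ereal ((1/2) * (norm (x - p))\<^sup>2) \<le> ereal \<gamma> * f y + ereal ((1/2) * (norm (x - y))\<^sup>2)"
      proof (cases "f y = \<infinity>")
        case False
        have "\<gamma> * real_of_ereal (f p) + (1/2) * (norm (x - p))\<^sup>2 \<le> \<gamma> * real_of_ereal (f y) + (1/2) * (norm (x - y))\<^sup>2"
          using vi[OF False] norm_eq[of y] zero_le_power2[of "norm (y - p)"] by argo
        then show ?thesis
          by (subst proper_fun_finite_eq[OF pf fp], subst proper_fun_finite_eq[OF pf False]) simp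
      qed (use \<open>0 < \<gamma>\<close> in simp)
    qed
  next
    fix q
    assume "\<forall>y. ereal \<gamma> * f q + ereal ((1/2) * (norm (x - q))\<^sup>2) \<le> ereal \<gamma> * f y + ereal ((1/2) * (norm (x - y))\<^sup>2)"
    then have qp: "ereal \<gamma> * f q + ereal ((1/2) * (norm (x - q))\<^sup>2) \<le> ereal \<gamma> * f p + ereal ((1/2) * (norm (x - p))\<^sup>2)"
      by blast
    have fq: "f q \<noteq> \<infinity>"
    proof
      assume "f q = \<infinity>"
      then show False
        using qp \<open>0 < \<gamma>\<close> by (subst (asm) proper_fun_finite_eq[OF pf fp]) simp
    qed
    have "\<gamma> * real_of_ereal (f q) + (1/2) * (norm (x - q))\<^sup>2 \<le> \<gamma> * real_of_ereal (f p) + (1/2) * (norm (x - p))\<^sup>2"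
      using qp by (subst (asm) proper_fun_finite_eq[OF pf fp], subst (asm) proper_fun_finite_eq[OF pf fq]) simp
    then have "(norm (q - p))\<^sup>2 \<le> 0"
      using vi[OF fq] norm_eq[of q] by argo
    then show "q = p"
      by simp
  qed
qed

lemma lsc_fun_lower_bound_near:
  fixes f :: "'a::real_normed_vector \<Rightarrow> ereal"
  assumes pf: "proper_fun f" and lsc: "lsc_fun f" and p0: "f p0 \<noteq> \<infinity>"
  obtains r where "0 < r"
    "\<And>y. f y \<noteq> \<infinity> \<Longrightarrow> norm (y - p0) < r \<Longrightarrow> real_of_ereal (f p0) - 1 < real_of_ereal (f y)"
proof -
  define a where "a = real_of_ereal (f p0)"
  have "open (- {y. f y \<le> ereal (a - 1)})"
    using lsc unfolding lsc_fun_def by blast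
  moreover have "f p0 = ereal a"
    unfolding a_def by (rule proper_fun_finite_eq[OF pf p0])
  then have "p0 \<in> - {y. f y \<le> ereal (a - 1)}"
    by simp
  ultimately obtain r where r: "0 < r" "ball p0 r \<subseteq> - {y. f y \<le> ereal (a - 1)}"
    using open_contains_ball_eq by blast
  have "a - 1 < real_of_ereal (f y)" if "f y \<noteq> \<infinity>" "norm (y - p0) < r" for y
  proof -
    have "\<not> f y \<le> ereal (a - 1)"
      using that(2) r(2) by (auto simp: dist_norm norm_minus_commute)
    then show ?thesis
      by (subst (asm) proper_fun_finite_eq[OF pf that(1)]) simp
  qed
  then show ?thesis
    unfolding a_def by (rule that[OF r(1)])
qed

lemma convex_lsc_cone_minorant:
  fixes f :: "'a::real_normed_vector \<Rightarrow> ereal"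
  assumes pf: "proper_fun f" and cf: "convex_fun f" and lsc: "lsc_fun f" and p0: "f p0 \<noteq> \<infinity>"
  obtains r where "0 < r"
    "\<And>y. f y \<noteq> \<infinity> \<Longrightarrow> real_of_ereal (f p0) - 1 - 2 * norm (y - p0) / r \<le> real_of_ereal (f y)"
proof -
  define a where "a = real_of_ereal (f p0)"
  obtain r where r: "0 < r" and near: "\<And>y. f y \<noteq> \<infinity> \<Longrightarrow> norm (y - p0) < r \<Longrightarrow> a - 1 < real_of_ereal (f y)"
    unfolding a_def by (rule lsc_fun_lower_bound_near[OF pf lsc p0]) auto
  have "a - 1 - 2 * norm (y - p0) / r \<le> real_of_ereal (f y)" if fy: "f y \<noteq> \<infinity>" for y
  proof (cases "norm (y - p0) < r")
    case True
    have "0 \<le> 2 * norm (y - p0) / r"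
      using r by simp
    then show ?thesis
      using near[OF fy True] by linarith
  next
    case False
    text \<open>Convexity transfers the bound at the point \<open>w\<close> of the segment with \<open>\<parallel>w - p0\<parallel> = r/2\<close> to \<open>y\<close>.\<close>
    define t where "t = r / (2 * norm (y - p0))"
    have "0 < norm (y - p0)"
      using False r by linarith
    have t: "0 < t" "t < 1"
      using False r by (auto simp: t_def zero_less_divide_iff divide_less_eq)
    define w where "w = t *\<^sub>R y + (1 - t) *\<^sub>R p0"
    have w: "f w \<noteq> \<infinity>" "real_of_ereal (f w) \<le> t * real_of_ereal (f y) + (1 - t) * a"
      unfolding w_def a_def using convex_funD_real[OF pf cf fy p0 t] by auto
    have "norm (w - p0) = r / 2"
      using t \<open>0 < norm (y - p0)\<close> r by (simp add: w_def t_def algebra_simps flip: scaleR_diff_right)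
    then have "a - 1 < t * real_of_ereal (f y) + (1 - t) * a"
      using near[OF w(1)] w(2) r by simp
    then have "a - 1 / t < real_of_ereal (f y)"
      using t by (simp add: field_simps)
    then show ?thesis
      using False r by (simp add: t_def)
  qed
  then show ?thesis
    unfolding a_def by (rule that[OF r])
qed

lemma lsc_fun_sublevel_plus_continuous_closed:
  fixes f :: "'a::real_normed_vector \<Rightarrow> ereal"
  assumes pf: "proper_fun f" and lsc: "lsc_fun f" and "0 < \<gamma>" and cont: "continuous_on UNIV \<phi>"
  shows "closed {w \<in> {w. f w \<noteq> \<infinity>}. \<gamma> * real_of_ereal (f w) + \<phi> w \<le> c}"
  unfolding closed_sequential_limits
proof (intro allI impI, elim conjE)
  fix ws w assume ws: "\<forall>n. ws n \<in> {w \<in> {w. f w \<noteq> \<infinity>}. \<gamma> * real_of_ereal (f w) + \<phi> w \<le> c}"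
    and lim: "ws \<longlonglongrightarrow> w"
  have \<phi>_lim: "(\<lambda>n. \<phi> (ws n)) \<longlonglongrightarrow> \<phi> w"
    by (rule continuous_on_tendsto_compose[OF cont lim]) auto
  have key: "f w \<noteq> \<infinity> \<and> \<gamma> * real_of_ereal (f w) \<le> c - \<phi> w + \<delta>" if "0 < \<delta>" for \<delta>
  proof -
    define C where "C = (c - \<phi> w + \<delta>) / \<gamma>"
    have "\<forall>\<^sub>F n in sequentially. \<phi> w - \<delta> < \<phi> (ws n)"
      using \<phi>_lim that by (simp add: order_tendsto_iff)
    then have ev: "\<forall>\<^sub>F n in sequentially. ws n \<in> {y. f y \<le> ereal C}"
    proof eventually_elim
      case (elim n)
      have fin: "f (ws n) \<noteq> \<infinity>" and le: "\<gamma> * real_of_ereal (f (ws n)) + \<phi> (ws n) \<le> c"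
        using ws by auto
      have "real_of_ereal (f (ws n)) \<le> C"
        using le elim \<open>0 < \<gamma>\<close> by (simp add: C_def field_simps)
      then show ?case
        using fin by (cases "f (ws n)") auto
    qed
    have "closed {y. f y \<le> ereal C}"
      using lsc unfolding lsc_fun_def by blast
    then have "w \<in> {y. f y \<le> ereal C}"
      using Lim_in_closed_set[OF _ ev trivial_limit_sequentially lim] by blast
    then have "f w \<noteq> \<infinity>" "real_of_ereal (f w) \<le> C"
      using proper_fun_le_ereal[OF pf] by auto
    then show ?thesis
      using \<open>0 < \<gamma>\<close> by (simp add: C_def field_simps)
  qed
  then have "f w \<noteq> \<infinity>"
    using zero_less_one by blast
  moreover have "\<gamma> * real_of_ereal (f w) \<le> c - \<phi> w"
    by (rule field_le_epsilon) (use key in auto)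
  ultimately show "w \<in> {w \<in> {w. f w \<noteq> \<infinity>}. \<gamma> * real_of_ereal (f w) + \<phi> w \<le> c}"
    by simp
qed

lemma prox_objective_bounded_below:
  fixes f :: "'a::real_inner \<Rightarrow> ereal"
  assumes pf: "proper_fun f" and cf: "convex_fun f" and lsc: "lsc_fun f" and "0 < \<gamma>"
  obtains c where "\<And>w. f w \<noteq> \<infinity> \<Longrightarrow> c \<le> \<gamma> * real_of_ereal (f w) + (norm (x - w))\<^sup>2 / 2"
proof -
  obtain p0 where p0: "f p0 \<noteq> \<infinity>"
    using pf unfolding proper_fun_def by blast
  obtain r where "0 < r" and cone: "\<And>y. f y \<noteq> \<infinity> \<Longrightarrow> real_of_ereal (f p0) - 1 - 2 * norm (y - p0) / r \<le> real_of_ereal (f y)"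
    by (rule convex_lsc_cone_minorant[OF pf cf lsc p0]) auto
  define a where "a = 2 * \<gamma> / r"
  have "\<gamma> * (real_of_ereal (f p0) - 1) - a * norm (x - p0) - a\<^sup>2 / 2
      \<le> \<gamma> * real_of_ereal (f w) + (norm (x - w))\<^sup>2 / 2" if "f w \<noteq> \<infinity>" for w
  proof -
    have "\<gamma> * (real_of_ereal (f p0) - 1) - a * norm (w - p0) \<le> \<gamma> * real_of_ereal (f w)"
      using mult_left_mono[OF cone[OF that], of \<gamma>] \<open>0 < \<gamma>\<close>
      by (simp add: a_def algebra_simps)
    moreover have "a * norm (w - p0) \<le> a * (norm (x - w) + norm (x - p0))"
      using \<open>0 < \<gamma>\<close> \<open>0 < r\<close> norm_triangle_ineq4[of "x - p0" "x - w"]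
      by (intro mult_left_mono) (auto simp: a_def)
    moreover have "0 \<le> (norm (x - w) - a)\<^sup>2"
      by simp
    ultimately show ?thesis
      by (simp add: power2_diff algebra_simps)
  qed
  then show ?thesis
    by (rule that)
qed

lemma prox_objective_has_minimizer:
  fixes f :: "'a::{real_inner,complete_space} \<Rightarrow> ereal"
  assumes pf: "proper_fun f" and cf: "convex_fun f" and lsc: "lsc_fun f" and "0 < \<gamma>"
  obtains p where "f p \<noteq> \<infinity>"
    "\<And>w. f w \<noteq> \<infinity> \<Longrightarrow> \<gamma> * real_of_ereal (f p) + (norm (x - p))\<^sup>2 / 2 \<le> \<gamma> * real_of_ereal (f w) + (norm (x - w))\<^sup>2 / 2"
proof -
  define D where "D = {w. f w \<noteq> \<infinity>}"
  define F where "F w = \<gamma> * real_of_ereal (f w) + (norm (x - w))\<^sup>2 / 2" for w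
  obtain c where c: "\<And>w. f w \<noteq> \<infinity> \<Longrightarrow> c \<le> F w"
    unfolding F_def by (rule prox_objective_bounded_below[OF assms]) auto
  have "D \<noteq> {}"
    using pf unfolding proper_fun_def D_def by blast
  moreover have "c \<le> F w" if "w \<in> D" for w
    using c that unfolding D_def by blast
  moreover have "closed {w \<in> D. F w \<le> c}" for c
    unfolding D_def F_def
    by (rule lsc_fun_sublevel_plus_continuous_closed[OF pf lsc \<open>0 < \<gamma>\<close>, where \<phi>="\<lambda>w. (norm (x - w))\<^sup>2 / 2"])
      (auto intro!: continuous_intros)
  moreover have "(1/2) *\<^sub>R (u + w) \<in> D \<and> F ((1/2) *\<^sub>R (u + w)) \<le> (F u + F w)/2 - (norm (u - w))\<^sup>2/8"
    if "u \<in> D" "w \<in> D" for u w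
  proof -
    have "(1/2) *\<^sub>R (u + w) = (1/2) *\<^sub>R u + (1 - 1/2) *\<^sub>R w"
      by (simp add: scaleR_add_right)
    then have mid: "f ((1/2) *\<^sub>R (u + w)) \<noteq> \<infinity>"
      "real_of_ereal (f ((1/2) *\<^sub>R (u + w))) \<le> (real_of_ereal (f u) + real_of_ereal (f w)) / 2"
      using convex_funD_real[OF pf cf _ _, of u w "1/2"] that unfolding D_def by auto
    have "x - (1/2) *\<^sub>R (u + w) = (1/2) *\<^sub>R ((x - u) + (x - w))"
      by (simp add: algebra_simps flip: scaleR_add_right)
    moreover have "norm ((x - u) - (x - w)) = norm (u - w)"
      by (simp add: norm_minus_commute)
    ultimately have "(norm (x - (1/2) *\<^sub>R (u + w)))\<^sup>2 = (norm (x - u))\<^sup>2/2 + (norm (x - w))\<^sup>2/2 - (norm (u - w))\<^sup>2/4"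
      by (simp only: power2_norm_midpoint)
    then show ?thesis
      using mid mult_left_mono[OF mid(2), of \<gamma>] \<open>0 < \<gamma>\<close> unfolding D_def F_def
      by (simp add: algebra_simps)
  qed
  ultimately obtain p where "p \<in> D" "\<And>w. w \<in> D \<Longrightarrow> F p \<le> F w"
    by (rule strongly_midconvex_has_minimizer) auto
  then show ?thesis
    unfolding D_def F_def by (intro that) auto
qed

lemma prox_minimizer_subdiff:
  fixes f :: "'a::real_inner \<Rightarrow> ereal"
  assumes pf: "proper_fun f" and cf: "convex_fun f" and "0 < \<gamma>" and fp: "f p \<noteq> \<infinity>"
    and min: "\<And>w. f w \<noteq> \<infinity> \<Longrightarrow> \<gamma> * real_of_ereal (f p) + (norm (x - p))\<^sup>2 / 2 \<le> \<gamma> * real_of_ereal (f w) + (norm (x - w))\<^sup>2 / 2"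
  shows "(1 / \<gamma>) *\<^sub>R (x - p) \<in> subdiff f p"
proof -
  have "\<gamma> * real_of_ereal (f p) + inner (x - p) (y - p) \<le> \<gamma> * real_of_ereal (f y)" if fy: "f y \<noteq> \<infinity>" for y
  proof (rule le_by_vanishing_parameter)
    fix t :: real assume t: "0 < t" "t < 1"
    define yt where "yt = t *\<^sub>R y + (1 - t) *\<^sub>R p"
    have yt: "f yt \<noteq> \<infinity>" "real_of_ereal (f yt) \<le> t * real_of_ereal (f y) + (1 - t) * real_of_ereal (f p)"
      unfolding yt_def using convex_funD_real[OF pf cf fy fp t] by auto
    have "x - yt = (x - p) - t *\<^sub>R (y - p)"
      unfolding yt_def by (simp add: algebra_simps)
    then have "(norm (x - yt))\<^sup>2 = (norm (x - p))\<^sup>2 - 2 * inner (x - p) (t *\<^sub>R (y - p)) + (norm (t *\<^sub>R (y - p)))\<^sup>2"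
      by (simp only: power2_norm_diff)
    then have "(norm (x - yt))\<^sup>2 = (norm (x - p))\<^sup>2 - 2 * (t * inner (x - p) (y - p)) + t\<^sup>2 * (norm (y - p))\<^sup>2"
      by (simp add: power_mult_distrib)
    then have "t * (\<gamma> * real_of_ereal (f p) + inner (x - p) (y - p))
        \<le> t * (\<gamma> * real_of_ereal (f y) + t * ((norm (y - p))\<^sup>2 / 2))"
      using min[OF yt(1)] mult_left_mono[OF yt(2), of \<gamma>] \<open>0 < \<gamma>\<close>
      by (simp add: algebra_simps power2_eq_square)
    then show "\<gamma> * real_of_ereal (f p) + inner (x - p) (y - p) \<le> \<gamma> * real_of_ereal (f y) + t * ((norm (y - p))\<^sup>2 / 2)"
      using t by simp
  qed
  then show ?thesis
    unfolding subdiff_scaled_iff_real[OF pf \<open>0 < \<gamma>\<close>] using fp by blast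
qed

lemma prox_subdiff:
  fixes f :: "'a::{real_inner,complete_space} \<Rightarrow> ereal"
  assumes pf: "proper_fun f" and cf: "convex_fun f" and lsc: "lsc_fun f" and "0 < \<gamma>"
  shows "(1 / \<gamma>) *\<^sub>R (x - prox (\<lambda>y. ereal \<gamma> * f y) x) \<in> subdiff f (prox (\<lambda>y. ereal \<gamma> * f y) x)"
proof -
  obtain p where "f p \<noteq> \<infinity>"
    "\<And>w. f w \<noteq> \<infinity> \<Longrightarrow> \<gamma> * real_of_ereal (f p) + (norm (x - p))\<^sup>2 / 2 \<le> \<gamma> * real_of_ereal (f w) + (norm (x - w))\<^sup>2 / 2"
    by (rule prox_objective_has_minimizer[OF assms]) auto
  then have "(1 / \<gamma>) *\<^sub>R (x - p) \<in> subdiff f p"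
    by (rule prox_minimizer_subdiff[OF pf cf \<open>0 < \<gamma>\<close>])
  then show ?thesis
    using prox_eqI[OF pf \<open>0 < \<gamma>\<close>] by simp
qed

lemma prox_nonexpansive:
  fixes f :: "'a::{real_inner,complete_space} \<Rightarrow> ereal"
  assumes pf: "proper_fun f" and cf: "convex_fun f" and lsc: "lsc_fun f" and "0 < \<gamma>"
  shows "norm (prox (\<lambda>y. ereal \<gamma> * f y) x - prox (\<lambda>y. ereal \<gamma> * f y) x') \<le> norm (x - x')"
proof -
  define p where "p = prox (\<lambda>y. ereal \<gamma> * f y) x"
  define p' where "p' = prox (\<lambda>y. ereal \<gamma> * f y) x'"
  have "0 \<le> inner ((1 / \<gamma>) *\<^sub>R (x - p) - (1 / \<gamma>) *\<^sub>R (x' - p')) (p - p')"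
    unfolding p_def p'_def using prox_subdiff[OF assms] by (intro subdiff_monotone[OF pf])
  moreover have "(1 / \<gamma>) *\<^sub>R (x - p) - (1 / \<gamma>) *\<^sub>R (x' - p') = (1 / \<gamma>) *\<^sub>R ((x - x') - (p - p'))"
    by (simp add: algebra_simps)
  ultimately have "0 \<le> inner ((x - x') - (p - p')) (p - p')"
    using \<open>0 < \<gamma>\<close> by (simp add: zero_le_divide_iff)
  then have "norm (p - p') * norm (p - p') \<le> norm (x - x') * norm (p - p')"
    using norm_cauchy_schwarz[of "x - x'" "p - p'"]
    by (simp add: inner_diff_left power2_norm_eq_inner flip: power2_eq_square)
  then show ?thesis
    unfolding p_def[symmetric] p'_def[symmetric]
    by (cases "p = p'") (simp_all add: mult_le_cancel_right_pos)
qed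

lemma subdiff_weak_strong_closed:
  fixes f :: "'a::{real_inner,complete_space} \<Rightarrow> ereal"
  assumes pf: "proper_fun f" and cf: "convex_fun f" and lsc: "lsc_fun f"
    and sub: "\<And>n. u n \<in> subdiff f (p n)" and bound: "\<And>n. norm (p n) \<le> B"
    and weak: "weakly_converges p z" and lim: "u \<longlonglongrightarrow> v"
  shows "v \<in> subdiff f z"
proof -
  define q where "q = prox (\<lambda>y. ereal 1 * f y) (z + v)"
  have q: "z + v - q \<in> subdiff f q"
    using prox_subdiff[OF pf cf lsc, of 1 "z + v"] by (simp add: q_def)
  have "(\<lambda>n. inner (z - q) (q - p n) + inner (v - u n) (q - p n)) \<longlonglongrightarrow> inner (z - q) (q - z) + 0"
  proof (intro tendsto_add tendsto_inner_zero_bounded)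
    show "(\<lambda>n. inner (z - q) (q - p n)) \<longlonglongrightarrow> inner (z - q) (q - z)"
      unfolding inner_diff_right by (intro tendsto_diff tendsto_const weakly_converges_inner[OF weak])
    show "(\<lambda>n. v - u n) \<longlonglongrightarrow> 0"
      using tendsto_diff[OF tendsto_const[of v] lim] by simp
    show "norm (q - p n) \<le> norm q + B" for n
      using bound[of n] norm_triangle_ineq4[of q "p n"] by linarith
  qed
  moreover have "0 \<le> inner (z - q) (q - p n) + inner (v - u n) (q - p n)" for n
    using subdiff_monotone[OF pf q sub[of n]] by (simp add: inner_diff_left algebra_simps)
  ultimately have "0 \<le> inner (z - q) (q - z)"
    by (intro LIMSEQ_le_const) auto
  moreover have "inner (z - q) (q - z) = - (norm (z - q))\<^sup>2"
    by (metis inner_minus_right minus_diff_eq power2_norm_eq_inner)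
  ultimately have "q = z"
    by simp
  then show ?thesis
    using q by simp
qed

section \<open>The forward--backward iteration\<close>

lemma fb_gap_decomposition:
  fixes \<beta> \<epsilon> \<gamma> L :: real
  assumes "0 < \<beta>" "0 < \<epsilon>" "\<epsilon> \<le> \<gamma>" "\<gamma> \<le> 2 * \<beta> / (1 + \<epsilon>)"
    and L: "L \<le> (1 - \<epsilon>) * (2 + \<epsilon> - \<gamma> / (2 * \<beta>))"
  obtains \<delta> where "\<epsilon> / (2 * \<beta>) \<le> \<delta>" "\<epsilon>\<^sup>2 \<le> 2 - L - \<delta>"
    "\<And>A W. (2 - L) * A\<^sup>2 - 2 * \<gamma> * W * A + 2 * \<gamma> * \<beta> * W\<^sup>2 = (2 - L - \<delta>) * A\<^sup>2 + \<delta> * (A - 2 * \<beta> * W)\<^sup>2"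
proof
  define \<delta> where "\<delta> = \<gamma> / (2 * \<beta>)"
  show "\<epsilon> / (2 * \<beta>) \<le> \<delta>"
    using assms by (simp add: \<delta>_def divide_right_mono)
  have "\<gamma> \<le> 2 * \<beta>"
    using assms by (smt (verit) divide_le_eq mult_le_cancel_left1)
  then have "0 \<le> \<epsilon> * (1 - \<delta>)"
    using assms by (simp add: \<delta>_def)
  moreover have "2 - \<delta> - (1 - \<epsilon>) * (2 + \<epsilon> - \<delta>) = \<epsilon>\<^sup>2 + \<epsilon> * (1 - \<delta>)"
    by (simp add: algebra_simps power2_eq_square)
  ultimately show "\<epsilon>\<^sup>2 \<le> 2 - L - \<delta>"
    using L unfolding \<delta>_def by linarith
  show "(2 - L) * A\<^sup>2 - 2 * \<gamma> * W * A + 2 * \<gamma> * \<beta> * W\<^sup>2 = (2 - L - \<delta>) * A\<^sup>2 + \<delta> * (A - 2 * \<beta> * W)\<^sup>2" for A W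
    using \<open>0 < \<beta>\<close> by (simp add: \<delta>_def power2_eq_square field_simps)
qed

locale forward_backward =
  fixes f :: "'a::{real_inner,complete_space} \<Rightarrow> ereal" and g :: "'a \<Rightarrow> real" and G :: "'a \<Rightarrow> 'a"
    and \<beta> \<epsilon> :: real and \<gamma> lam :: "nat \<Rightarrow> real" and a b x :: "nat \<Rightarrow> 'a" and S :: "'a set"
  assumes beta: "0 < \<beta>" and eps: "0 < \<epsilon>" "\<epsilon> < min (1/2) \<beta>"
    and pf: "proper_fun f" and lsc: "lsc_fun f" and cf: "convex_fun f"
    and g_convex: "convex_on UNIV g"
    and g_grad: "\<And>y. (g has_derivative (\<lambda>h. inner (G y) h)) (at y)"
    and G_lip: "\<And>y z. norm (G y - G z) \<le> (1 / \<beta>) * norm (y - z)"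
    and S_def: "S = {z. \<forall>y. f z + ereal (g z) \<le> f y + ereal (g y)}"
    and S_ne: "S \<noteq> {}"
    and gamma: "\<And>n. \<epsilon> \<le> \<gamma> n \<and> \<gamma> n \<le> 2 * \<beta> / (1 + \<epsilon>)"
    and a_sum: "summable (\<lambda>n. norm (a n))"
    and b_sum: "summable (\<lambda>n. norm (b n))"
    and lam_bd: "\<And>n. \<epsilon> \<le> lam n \<and> lam n \<le> (1 - \<epsilon>) * (2 + \<epsilon> - \<gamma> n / (2 * \<beta>))"
    and x_rec: "\<And>n. x (Suc n) = x n + lam n *\<^sub>R
        (prox (\<lambda>y. ereal (\<gamma> n) * f y) (x n - \<gamma> n *\<^sub>R (G (x n) + b n)) + a n - x n)"
begin

lemma gamma_pos: "0 < \<gamma> n"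
  using gamma[of n] eps by linarith

lemma lam_pos: "0 < lam n"
  using lam_bd[of n] eps by linarith

lemma gamma_le: "\<gamma> n \<le> 2 * \<beta>"
proof -
  have "2 * \<beta> \<le> 2 * \<beta> * (1 + \<epsilon>)"
    using beta eps by simp
  then have "2 * \<beta> / (1 + \<epsilon>) \<le> 2 * \<beta>"
    using eps by (simp add: divide_le_eq)
  then show ?thesis
    using gamma[of n] by linarith
qed

lemma lam_le: "lam n \<le> 3"
proof -
  have "0 \<le> \<gamma> n / (2 * \<beta>)"
    using gamma_pos[of n] beta by simp
  moreover have "\<gamma> n / (2 * \<beta>) \<le> 1"
    using gamma_le[of n] beta by (simp add: divide_le_eq)
  ultimately have "(1 - \<epsilon>) * (2 + \<epsilon> - \<gamma> n / (2 * \<beta>)) \<le> 1 * (2 + \<epsilon>)"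
    using eps by (intro mult_mono) linarith+
  then show ?thesis
    using lam_bd[of n] eps by simp
qed

lemma solution_iff: "z \<in> S \<longleftrightarrow> - G z \<in> subdiff f z"
  using minimizer_iff_neg_gradient_subdiff[OF pf cf g_convex g_grad] unfolding S_def by simp

definition prox_step :: "nat \<Rightarrow> 'a" where
  "prox_step n = prox (\<lambda>y. ereal (\<gamma> n) * f y) (x n - \<gamma> n *\<^sub>R G (x n))"

definition relaxed_step :: "nat \<Rightarrow> 'a" where
  "relaxed_step n = x n + lam n *\<^sub>R (prox_step n - x n)"

definition subgrad :: "nat \<Rightarrow> 'a" where
  "subgrad n = (1 / \<gamma> n) *\<^sub>R (x n - prox_step n) - G (x n)"

definition err :: "nat \<Rightarrow> real" where
  "err n = lam n * (\<gamma> n * norm (b n) + norm (a n))"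

text \<open>The quadratic form \<open>Q\<^sub>n(z)\<close> of the proof idea.\<close>

definition gap :: "'a \<Rightarrow> nat \<Rightarrow> real" where
  "gap z n = (2 - lam n) * (norm (prox_step n - x n))\<^sup>2
    - 2 * \<gamma> n * norm (G (x n) - G z) * norm (prox_step n - x n)
    + 2 * \<gamma> n * \<beta> * (norm (G (x n) - G z))\<^sup>2"

lemma subgrad_subdiff: "subgrad n \<in> subdiff f (prox_step n)"
  using prox_subdiff[OF pf cf lsc gamma_pos, of n "x n - \<gamma> n *\<^sub>R G (x n)"] gamma_pos[of n]
  by (simp add: subgrad_def prox_step_def algebra_simps)

lemma err_nonneg: "0 \<le> err n"
  unfolding err_def using lam_pos[of n] gamma_pos[of n] by simp

lemma err_summable: "summable err"
proof (rule summable_comparison_test'[where g="\<lambda>n. 3 * (2 * \<beta> * norm (b n) + norm (a n))"])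
  show "summable (\<lambda>n. 3 * (2 * \<beta> * norm (b n) + norm (a n)))"
    using a_sum b_sum by (intro summable_mult summable_add) auto
  show "norm (err n) \<le> 3 * (2 * \<beta> * norm (b n) + norm (a n))" for n
  proof -
    have "\<gamma> n * norm (b n) + norm (a n) \<le> 2 * \<beta> * norm (b n) + norm (a n)"
      using gamma_le[of n] by (simp add: mult_right_mono)
    then have "err n \<le> 3 * (2 * \<beta> * norm (b n) + norm (a n))"
      unfolding err_def using lam_le[of n] gamma_pos[of n] by (intro mult_mono) auto
    then show ?thesis
      using err_nonneg[of n] by simp
  qed
qed

lemma dist_relaxed_step_le: "norm (x (Suc n) - relaxed_step n) \<le> err n"
proof -
  define q where "q = prox (\<lambda>y. ereal (\<gamma> n) * f y) (x n - \<gamma> n *\<^sub>R (G (x n) + b n))"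
  have "norm (q - prox_step n) \<le> norm ((x n - \<gamma> n *\<^sub>R (G (x n) + b n)) - (x n - \<gamma> n *\<^sub>R G (x n)))"
    unfolding q_def prox_step_def by (rule prox_nonexpansive[OF pf cf lsc gamma_pos])
  then have "norm (q - prox_step n) \<le> \<gamma> n * norm (b n)"
    using gamma_pos[of n] by (simp add: algebra_simps)
  moreover have "x (Suc n) - relaxed_step n = lam n *\<^sub>R ((q - prox_step n) + a n)"
    unfolding x_rec relaxed_step_def q_def by (simp add: algebra_simps)
  ultimately show ?thesis
    using lam_pos[of n] norm_triangle_ineq[of "q - prox_step n" "a n"]
    unfolding err_def by (auto intro!: mult_left_mono)
qed

lemma prox_step_inner_bound:
  assumes "z \<in> S"
  shows "inner (prox_step n - x n) (prox_step n - z)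
    \<le> - \<gamma> n * \<beta> * (norm (G (x n) - G z))\<^sup>2 + \<gamma> n * norm (G (x n) - G z) * norm (prox_step n - x n)"
proof -
  define p c d W A where "p = prox_step n" and "c = \<gamma> n" and "d = p - x n"
    and "W = norm (G (x n) - G z)" and "A = norm d"
  have c: "0 < c"
    unfolding c_def by (rule gamma_pos)
  have "0 \<le> inner (subgrad n - - G z) (p - z)"
    using subdiff_monotone[OF pf subgrad_subdiff assms[unfolded solution_iff]] by (simp add: p_def)
  then have "0 \<le> inner (c *\<^sub>R (subgrad n - - G z)) (p - z)"
    using c by simp
  also have "c *\<^sub>R (subgrad n - - G z) = - d - c *\<^sub>R (G (x n) - G z)"
    using c by (simp add: subgrad_def p_def c_def d_def algebra_simps)
  also have "inner (- d - c *\<^sub>R (G (x n) - G z)) (p - z) = - inner d (p - z) - c * inner (G (x n) - G z) (p - z)"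
    by (simp add: inner_diff_left)
  finally have "c * inner (G (x n) - G z) (p - z) \<le> - inner d (p - z)"
    by linarith
  moreover have "\<beta> * W\<^sup>2 - W * A \<le> inner (G (x n) - G z) (p - z)"
  proof -
    have "\<beta> * W\<^sup>2 \<le> inner (G (x n) - G z) (x n - z)"
      unfolding W_def by (rule baillon_haddad[OF g_convex g_grad G_lip beta])
    moreover have "- (W * A) \<le> inner (G (x n) - G z) d"
      using Cauchy_Schwarz_ineq2[of "G (x n) - G z" d] unfolding W_def A_def by linarith
    ultimately show ?thesis
      by (simp add: d_def inner_diff_right)
  qed
  then have "c * (\<beta> * W\<^sup>2 - W * A) \<le> c * inner (G (x n) - G z) (p - z)"
    using c by (intro mult_left_mono) auto
  moreover have "c * (\<beta> * W\<^sup>2 - W * A) = c * \<beta> * W\<^sup>2 - c * W * A"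
    by (simp add: algebra_simps)
  ultimately have "inner d (p - z) \<le> - c * \<beta> * W\<^sup>2 + c * W * A"
    by linarith
  then show ?thesis
    by (simp add: p_def c_def d_def W_def A_def)
qed

lemma relaxed_step_fejer:
  assumes "z \<in> S"
  shows "(norm (relaxed_step n - z))\<^sup>2 \<le> (norm (x n - z))\<^sup>2 - lam n * gap z n"
proof -
  define p c d W A where "p = prox_step n" and "c = \<gamma> n" and "d = p - x n"
    and "W = norm (G (x n) - G z)" and "A = norm d"
  have "inner d (p - z) \<le> - c * \<beta> * W\<^sup>2 + c * W * A"
    using prox_step_inner_bound[OF assms, of n] by (simp add: p_def c_def d_def W_def A_def)
  then have step: "lam n * inner d (p - z) \<le> lam n * (- c * \<beta> * W\<^sup>2 + c * W * A)"
    using lam_pos[of n] by (intro mult_left_mono) auto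
  have "(norm (relaxed_step n - z))\<^sup>2
      = (norm (x n - z))\<^sup>2 + 2 * (lam n * inner d (p - z)) - 2 * lam n * A\<^sup>2 + (lam n)\<^sup>2 * A\<^sup>2"
  proof -
    have "relaxed_step n - z = (x n - z) + lam n *\<^sub>R d"
      by (simp add: relaxed_step_def d_def p_def)
    then have "(norm (relaxed_step n - z))\<^sup>2
        = (norm (x n - z))\<^sup>2 + 2 * inner (x n - z) (lam n *\<^sub>R d) + (norm (lam n *\<^sub>R d))\<^sup>2"
      by (simp only: power2_norm_add)
    also have "\<dots> = (norm (x n - z))\<^sup>2 + 2 * (lam n * inner (x n - z) d) + (lam n)\<^sup>2 * A\<^sup>2"
      by (simp add: power_mult_distrib A_def)
    also have "inner (x n - z) d = inner d (p - z) - A\<^sup>2"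
      by (simp add: d_def A_def inner_diff_left inner_diff_right inner_commute power2_norm_eq_inner)
    finally show ?thesis
      by (simp add: algebra_simps)
  qed
  also have "\<dots> \<le> (norm (x n - z))\<^sup>2 + 2 * (lam n * (- c * \<beta> * W\<^sup>2 + c * W * A)) - 2 * lam n * A\<^sup>2 + (lam n)\<^sup>2 * A\<^sup>2"
    using step by linarith
  also have "\<dots> = (norm (x n - z))\<^sup>2 - lam n * gap z n"
    by (simp add: gap_def A_def W_def c_def d_def p_def algebra_simps power2_eq_square)
  finally show ?thesis .
qed

lemma gap_decomposition:
  obtains \<delta> where "\<epsilon> / (2 * \<beta>) \<le> \<delta>" "\<epsilon>\<^sup>2 \<le> 2 - lam n - \<delta>"
    "gap z n = (2 - lam n - \<delta>) * (norm (prox_step n - x n))\<^sup>2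
      + \<delta> * (norm (prox_step n - x n) - 2 * \<beta> * norm (G (x n) - G z))\<^sup>2"
proof -
  have "\<epsilon> \<le> \<gamma> n" "\<gamma> n \<le> 2 * \<beta> / (1 + \<epsilon>)" "lam n \<le> (1 - \<epsilon>) * (2 + \<epsilon> - \<gamma> n / (2 * \<beta>))"
    using gamma[of n] lam_bd[of n] by auto
  then obtain \<delta> where \<delta>: "\<epsilon> / (2 * \<beta>) \<le> \<delta>" "\<epsilon>\<^sup>2 \<le> 2 - lam n - \<delta>"
    and eq: "\<And>A W. (2 - lam n) * A\<^sup>2 - 2 * \<gamma> n * W * A + 2 * \<gamma> n * \<beta> * W\<^sup>2
      = (2 - lam n - \<delta>) * A\<^sup>2 + \<delta> * (A - 2 * \<beta> * W)\<^sup>2"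
    by (rule fb_gap_decomposition[OF beta eps(1)]) auto
  have "gap z n = (2 - lam n - \<delta>) * (norm (prox_step n - x n))\<^sup>2
      + \<delta> * (norm (prox_step n - x n) - 2 * \<beta> * norm (G (x n) - G z))\<^sup>2"
    unfolding gap_def by (rule eq)
  then show ?thesis
    by (rule that[OF \<delta>])
qed

lemma gap_ge_step: "\<epsilon>\<^sup>2 * (norm (prox_step n - x n))\<^sup>2 \<le> gap z n"
proof -
  obtain \<delta> where \<delta>: "\<epsilon> / (2 * \<beta>) \<le> \<delta>" "\<epsilon>\<^sup>2 \<le> 2 - lam n - \<delta>"
    and eq: "gap z n = (2 - lam n - \<delta>) * (norm (prox_step n - x n))\<^sup>2
      + \<delta> * (norm (prox_step n - x n) - 2 * \<beta> * norm (G (x n) - G z))\<^sup>2"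
    by (rule gap_decomposition)
  have "0 < \<epsilon> / (2 * \<beta>)"
    using beta eps by simp
  then have "0 \<le> \<delta>"
    using \<delta>(1) by linarith
  then show ?thesis
    unfolding eq using \<delta>(2) by (intro add_increasing2 mult_right_mono) auto
qed

lemma gap_ge_gradient: "2 * \<beta>\<^sup>2 * min (\<epsilon>\<^sup>2) (\<epsilon> / (2 * \<beta>)) * (norm (G (x n) - G z))\<^sup>2 \<le> gap z n"
proof -
  define A W m where "A = norm (prox_step n - x n)" and "W = norm (G (x n) - G z)"
    and "m = min (\<epsilon>\<^sup>2) (\<epsilon> / (2 * \<beta>))"
  obtain \<delta> where \<delta>: "\<epsilon> / (2 * \<beta>) \<le> \<delta>" "\<epsilon>\<^sup>2 \<le> 2 - lam n - \<delta>"
    and eq: "gap z n = (2 - lam n - \<delta>) * A\<^sup>2 + \<delta> * (A - 2 * \<beta> * W)\<^sup>2"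
    unfolding A_def W_def by (rule gap_decomposition)
  have m: "0 \<le> m" "m \<le> 2 - lam n - \<delta>" "m \<le> \<delta>"
    using \<delta> beta eps by (auto simp: m_def)
  have "m * (2 * \<beta>\<^sup>2 * W\<^sup>2) \<le> m * (A\<^sup>2 + (A - 2 * \<beta> * W)\<^sup>2)"
  proof (rule mult_left_mono[OF _ m(1)])
    have "A\<^sup>2 + (A - 2 * \<beta> * W)\<^sup>2 - 2 * \<beta>\<^sup>2 * W\<^sup>2 = 2 * (A - \<beta> * W)\<^sup>2"
      by (simp add: power2_eq_square algebra_simps)
    moreover have "0 \<le> 2 * (A - \<beta> * W)\<^sup>2"
      by simp
    ultimately show "2 * \<beta>\<^sup>2 * W\<^sup>2 \<le> A\<^sup>2 + (A - 2 * \<beta> * W)\<^sup>2"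
      by linarith
  qed
  also have "\<dots> \<le> (2 - lam n - \<delta>) * A\<^sup>2 + \<delta> * (A - 2 * \<beta> * W)\<^sup>2"
    using m by (simp add: distrib_left add_mono mult_right_mono)
  finally show ?thesis
    unfolding eq W_def[symmetric] m_def[symmetric] by (simp add: algebra_simps)
qed

lemma gap_nonneg: "0 \<le> gap z n"
proof -
  have "0 \<le> \<epsilon>\<^sup>2 * (norm (prox_step n - x n))\<^sup>2"
    by simp
  then show ?thesis
    using gap_ge_step[of n z] by linarith
qed

lemma relaxed_step_le:
  assumes "z \<in> S"
  shows "norm (relaxed_step n - z) \<le> norm (x n - z)"
proof -
  have "0 \<le> lam n * gap z n"
    using lam_pos[of n] gap_nonneg[of z n] by simp
  then have "(norm (relaxed_step n - z))\<^sup>2 \<le> (norm (x n - z))\<^sup>2"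
    using relaxed_step_fejer[OF assms, of n] by linarith
  then show ?thesis
    by (rule power2_le_imp_le) simp
qed

lemma dist_Suc_le:
  assumes "z \<in> S"
  shows "norm (x (Suc n) - z) \<le> norm (x n - z) + err n"
  using norm_triangle_ineq[of "relaxed_step n - z" "x (Suc n) - relaxed_step n"]
    relaxed_step_le[OF assms, of n] dist_relaxed_step_le[of n]
  by simp

lemma dist_convergent:
  assumes "z \<in> S"
  shows "convergent (\<lambda>n. norm (x n - z))"
  by (rule quasi_fejer_convergent[OF _ err_nonneg err_summable dist_Suc_le[OF assms]]) simp

lemma dist_bounded:
  assumes "z \<in> S"
  obtains M where "\<And>n. norm (x n - z) \<le> M"
  using convergent_imp_Bseq[OF dist_convergent[OF assms]]
  by (metis BseqE real_norm_def abs_le_D1 norm_ge_zero abs_of_nonneg)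

lemma sq_dist_Suc_le:
  assumes z: "z \<in> S" and M: "\<And>n. norm (x n - z) \<le> M"
  shows "(norm (x (Suc n) - z))\<^sup>2 \<le> (norm (x n - z))\<^sup>2 - \<epsilon> * gap z n + (2 * M + suminf err) * err n"
proof -
  have "norm (x (Suc n) - z) \<le> norm (relaxed_step n - z) + err n"
    using norm_triangle_ineq[of "relaxed_step n - z" "x (Suc n) - relaxed_step n"] dist_relaxed_step_le[of n]
    by simp
  moreover have "err n \<le> suminf err"
    using sum_le_suminf[OF err_summable, of "{n}"] err_nonneg by simp
  ultimately have "(norm (x (Suc n) - z))\<^sup>2 \<le> (norm (relaxed_step n - z))\<^sup>2 + (2 * M + suminf err) * err n"
    using relaxed_step_le[OF z, of n] M[of n] err_nonneg[of n]
    by (intro power2_le_add_bounded) auto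
  moreover have "\<epsilon> * gap z n \<le> lam n * gap z n"
    using lam_bd[of n] gap_nonneg[of z n] by (intro mult_right_mono) auto
  ultimately show ?thesis
    using relaxed_step_fejer[OF z, of n] by linarith
qed

lemma gap_summable:
  assumes "z \<in> S"
  shows "summable (gap z)"
proof -
  obtain M where M: "\<And>n. norm (x n - z) \<le> M"
    by (rule dist_bounded[OF assms]) auto
  have "0 \<le> M"
    using M[of 0] norm_ge_zero order_trans by blast
  have "summable (\<lambda>n. \<epsilon> * gap z n)"
  proof (rule summable_by_telescoping[where a="\<lambda>n. (norm (x n - z))\<^sup>2" and d="\<lambda>n. (2 * M + suminf err) * err n"])
    show "0 \<le> \<epsilon> * gap z n" for n
      using eps(1) gap_nonneg[of z n] by simp
    show "0 \<le> (2 * M + suminf err) * err n" for n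
      using \<open>0 \<le> M\<close> err_nonneg[of n] suminf_nonneg[OF err_summable err_nonneg] by simp
    show "summable (\<lambda>n. (2 * M + suminf err) * err n)"
      using err_summable by (rule summable_mult)
  qed (use sq_dist_Suc_le[OF assms M] in simp_all)
  then have "summable (\<lambda>n. (1 / \<epsilon>) * (\<epsilon> * gap z n))"
    by (rule summable_mult)
  then show ?thesis
    using eps(1) by simp
qed

lemma prox_step_summable: "summable (\<lambda>n. (norm (prox_step n - x n))\<^sup>2)"
proof -
  obtain z where "z \<in> S"
    using S_ne by blast
  show ?thesis
  proof (rule summable_comparison_test'[OF summable_mult[OF gap_summable[OF \<open>z \<in> S\<close>], of "1 / \<epsilon>\<^sup>2"]])
    show "norm ((norm (prox_step n - x n))\<^sup>2) \<le> 1 / \<epsilon>\<^sup>2 * gap z n" for n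
      using gap_ge_step[of n z] eps(1) by (simp add: field_simps)
  qed
qed

lemma gradient_summable:
  assumes "z \<in> S"
  shows "summable (\<lambda>n. (norm (G (x n) - G z))\<^sup>2)"
proof -
  define \<kappa> where "\<kappa> = 2 * \<beta>\<^sup>2 * min (\<epsilon>\<^sup>2) (\<epsilon> / (2 * \<beta>))"
  have "0 < \<kappa>"
    using beta eps(1) by (simp add: \<kappa>_def)
  show ?thesis
  proof (rule summable_comparison_test'[OF summable_mult[OF gap_summable[OF assms], of "1 / \<kappa>"]])
    show "norm ((norm (G (x n) - G z))\<^sup>2) \<le> 1 / \<kappa> * gap z n" for n
      using gap_ge_gradient[of n z] \<open>0 < \<kappa>\<close> unfolding \<kappa>_def[symmetric] by (simp add: field_simps)
  qed
qed

lemma prox_step_minus_x_tendsto: "(\<lambda>n. prox_step n - x n) \<longlonglongrightarrow> 0"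
  using prox_step_summable by (rule summable_power2_norm_imp_tendsto_zero)

lemma gradient_tendsto:
  assumes "z \<in> S"
  shows "(\<lambda>n. G (x n)) \<longlonglongrightarrow> G z"
  using summable_power2_norm_imp_tendsto_zero[OF gradient_summable[OF assms]] by (simp add: LIM_zero_iff)

lemma x_bounded:
  obtains B where "\<And>n. norm (x n) \<le> B"
proof -
  obtain z where "z \<in> S"
    using S_ne by blast
  obtain M where M: "\<And>n. norm (x n - z) \<le> M"
    by (rule dist_bounded[OF \<open>z \<in> S\<close>]) auto
  have "norm (x n) \<le> M + norm z" for n
    using M[of n] norm_triangle_ineq[of "x n - z" z] by simp
  then show ?thesis
    by (rule that)
qed

lemma prox_step_bounded:
  obtains C where "\<And>n. norm (prox_step n) \<le> C"
proof -
  obtain B where B: "\<And>n. norm (x n) \<le> B"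
    by (rule x_bounded) auto
  have "convergent (\<lambda>n. prox_step n - x n)"
    using prox_step_minus_x_tendsto by (auto simp: convergent_def)
  then obtain C where C: "\<And>n. norm (prox_step n - x n) \<le> C"
    by (rule bounded_if_convergent) auto
  have "norm (prox_step n) \<le> B + C" for n
    using B[of n] C[of n] norm_triangle_ineq[of "x n" "prox_step n - x n"] by simp
  then show ?thesis
    by (rule that)
qed

lemma subgrad_tendsto:
  assumes "z \<in> S"
  shows "subgrad \<longlonglongrightarrow> - G z"
proof -
  have "(\<lambda>n. (1 / \<gamma> n) *\<^sub>R (x n - prox_step n)) \<longlonglongrightarrow> 0"
  proof (rule Lim_null_comparison)
    have "norm ((1 / \<gamma> n) *\<^sub>R (x n - prox_step n)) \<le> 1 / \<epsilon> * norm (prox_step n - x n)" for n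
    proof -
      have "1 / \<gamma> n \<le> 1 / \<epsilon>"
        using gamma[of n] eps(1) by (intro frac_le) auto
      then have "1 / \<gamma> n * norm (x n - prox_step n) \<le> 1 / \<epsilon> * norm (x n - prox_step n)"
        by (rule mult_right_mono) simp
      then show ?thesis
        using gamma_pos[of n] by (simp add: norm_minus_commute)
    qed
    then show "\<forall>\<^sub>F n in sequentially. norm ((1 / \<gamma> n) *\<^sub>R (x n - prox_step n)) \<le> 1 / \<epsilon> * norm (prox_step n - x n)"
      by simp
    show "(\<lambda>n. 1 / \<epsilon> * norm (prox_step n - x n)) \<longlonglongrightarrow> 0"
      using prox_step_minus_x_tendsto by (intro tendsto_mult_right_zero) (simp add: tendsto_norm_zero)
  qed
  then have "(\<lambda>n. (1 / \<gamma> n) *\<^sub>R (x n - prox_step n) - G (x n)) \<longlonglongrightarrow> 0 - G z"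
    by (intro tendsto_diff gradient_tendsto[OF assms])
  then show ?thesis
    by (simp add: subgrad_def[abs_def])
qed

lemma weak_cluster_point_in_S:
  assumes r: "strict_mono r" and weak: "weakly_converges (x \<circ> r) z"
  shows "z \<in> S"
proof -
  obtain z0 where "z0 \<in> S"
    using S_ne by blast
  obtain B where B: "\<And>n. norm (x n) \<le> B"
    by (rule x_bounded) auto
  have "\<And>n. norm ((x \<circ> r) n) \<le> B"
    using B by simp
  moreover have "(\<lambda>n. G ((x \<circ> r) n)) \<longlonglongrightarrow> G z0"
    using LIMSEQ_subseq_LIMSEQ[OF gradient_tendsto[OF \<open>z0 \<in> S\<close>] r] by (simp add: o_def)
  ultimately have "G z = G z0"
    by (rule cocoercive_weak_strong_closed[OF baillon_haddad[OF g_convex g_grad G_lip beta] beta _ weak])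
  obtain C where C: "\<And>n. norm (prox_step n) \<le> C"
    by (rule prox_step_bounded) auto
  have "(\<lambda>n. (prox_step \<circ> r) n - (x \<circ> r) n) \<longlonglongrightarrow> 0"
    using LIMSEQ_subseq_LIMSEQ[OF prox_step_minus_x_tendsto r] by (simp add: o_def)
  then have "weakly_converges (prox_step \<circ> r) z"
    by (rule weakly_converges_diff_null[OF weak])
  moreover have "(subgrad \<circ> r) \<longlonglongrightarrow> - G z"
    using LIMSEQ_subseq_LIMSEQ[OF subgrad_tendsto[OF \<open>z0 \<in> S\<close>] r] \<open>G z = G z0\<close> by simp
  ultimately have "- G z \<in> subdiff f z"
    using subdiff_weak_strong_closed[OF pf cf lsc, of "subgrad \<circ> r" "prox_step \<circ> r" C]
      subgrad_subdiff C by simp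
  then show ?thesis
    by (simp add: solution_iff)
qed

lemma weakly_convergent: "\<exists>z\<in>S. weakly_converges x z"
proof -
  obtain B where B: "\<And>n. norm (x n) \<le> B"
    by (rule x_bounded) auto
  show ?thesis
  proof (rule opial[OF B])
    show "convergent (\<lambda>n. (norm (x n - z))\<^sup>2)" if "z \<in> S" for z
      using dist_convergent[OF that] by (auto simp: convergent_def intro: tendsto_power)
  qed (rule weak_cluster_point_in_S)
qed

lemma convergent_if_interior:
  assumes "interior S \<noteq> {}"
  shows "convergent x"
proof -
  obtain w where "w \<in> interior S"
    using assms by blast
  then obtain \<rho> where "0 < \<rho>" "ball w \<rho> \<subseteq> S"
    using mem_interior by blast
  then have "summable (\<lambda>n. norm (x (Suc n) - x n))"
    using quasi_fejer_ball_summable_steps[OF _ _ dist_Suc_le err_nonneg err_summable] by blast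
  then show ?thesis
    by (rule convergent_if_summable_steps)
qed

lemma strongly_convergent:
  assumes "(\<forall>z\<in>S. demiregular_at (subdiff f) z) \<or> (\<forall>z\<in>S. demiregular_at (\<lambda>y. {G y}) z)
    \<or> interior S \<noteq> {}"
  shows "\<exists>z\<in>S. x \<longlonglongrightarrow> z"
proof -
  obtain z where z: "z \<in> S" and weak: "weakly_converges x z"
    using weakly_convergent by blast
  from assms have "x \<longlonglongrightarrow> z"
  proof (elim disjE)
    assume "\<forall>z\<in>S. demiregular_at (subdiff f) z"
    then have "demiregular_at (subdiff f) z"
      using z by blast
    from this[unfolded demiregular_at_def, THEN conjunct2, rule_format, where xs=prox_step and us=subgrad and u="- G z"]
    have "prox_step \<longlonglongrightarrow> z"
      using z subgrad_subdiff solution_iff[of z] subgrad_tendsto[OF z]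
        weakly_converges_diff_null[OF weak prox_step_minus_x_tendsto] by simp
    then have "(\<lambda>n. prox_step n - (prox_step n - x n)) \<longlonglongrightarrow> z - 0"
      by (intro tendsto_diff prox_step_minus_x_tendsto)
    then show ?thesis
      by simp
  next
    assume "\<forall>z\<in>S. demiregular_at (\<lambda>y. {G y}) z"
    then have "demiregular_at (\<lambda>y. {G y}) z"
      using z by blast
    from this[unfolded demiregular_at_def, THEN conjunct2, rule_format, where xs=x and us="\<lambda>n. G (x n)" and u="G z"]
    show ?thesis
      using weak gradient_tendsto[OF z] by simp
  next
    assume "interior S \<noteq> {}"
    then obtain l where "x \<longlonglongrightarrow> l"
      using convergent_if_interior by (auto simp: convergent_def)
    moreover from this weak have "l = z"
      by (rule weakly_converges_tendsto_eq)
    ultimately show ?thesis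
      by simp
  qed
  then show ?thesis
    using z by blast
qed

end

theorem proposition4p7:
  fixes f :: "'a::{real_inner, complete_space} \<Rightarrow> ereal"
    and g :: "'a \<Rightarrow> real" and G :: "'a \<Rightarrow> 'a"
    and \<beta> \<epsilon> :: real and x0 :: 'a
    and \<gamma> lam :: "nat \<Rightarrow> real" and a b x :: "nat \<Rightarrow> 'a"
    and S :: "'a set"
  assumes beta: "0 < \<beta>"
    and eps: "0 < \<epsilon>" "\<epsilon> < min (1/2) \<beta>"
    and f: "proper_fun f" "lsc_fun f" "convex_fun f"
    and g_convex: "convex_on UNIV g"
    and g_grad: "\<And>y. (g has_derivative (\<lambda>h. inner (G y) h)) (at y)"
    and G_lip: "\<And>y z. norm (G y - G z) \<le> (1 / \<beta>) * norm (y - z)"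
    and S_def: "S = {z. \<forall>y. f z + ereal (g z) \<le> f y + ereal (g y)}"
    and S_ne: "S \<noteq> {}"
    and gamma: "\<And>n. \<epsilon> \<le> \<gamma> n \<and> \<gamma> n \<le> 2 * \<beta> / (1 + \<epsilon>)"
    and a_sum: "summable (\<lambda>n. norm (a n))"
    and b_sum: "summable (\<lambda>n. norm (b n))"
    and lam_bd: "\<And>n. \<epsilon> \<le> lam n \<and> lam n \<le> (1 - \<epsilon>) * (2 + \<epsilon> - \<gamma> n / (2 * \<beta>))"
    and x_0: "x 0 = x0"
    and x_rec: "\<And>n. x (Suc n) = x n + lam n *\<^sub>R
        (prox (\<lambda>y. ereal (\<gamma> n) * f y) (x n - \<gamma> n *\<^sub>R (G (x n) + b n)) + a n - x n)"
  shows "summable (\<lambda>n. (norm (prox (\<lambda>y. ereal (\<gamma> n) * f y) (x n - \<gamma> n *\<^sub>R G (x n)) - x n))\<^sup>2)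
     \<and> (\<forall>z\<in>S. summable (\<lambda>n. (norm (G (x n) - G z))\<^sup>2))
     \<and> (\<exists>z\<in>S. weakly_converges x z)
     \<and> ((\<forall>z\<in>S. demiregular_at (subdiff f) z) \<or> (\<forall>z\<in>S. demiregular_at (\<lambda>y. {G y}) z)
           \<or> interior S \<noteq> {} \<longrightarrow> (\<exists>z\<in>S. x \<longlonglongrightarrow> z))"
proof -
  interpret forward_backward f g G \<beta> \<epsilon> \<gamma> lam a b x S
    using beta eps f g_convex g_grad G_lip S_def S_ne gamma a_sum b_sum lam_bd x_rec
    by unfold_locales auto
  show ?thesis
    using prox_step_summable[unfolded prox_step_def] gradient_summable weakly_convergent strongly_convergent
    by (intro conjI ballI impI) simp_all
qed

end
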